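(* Let $A$ be the adjacency matrix of a graph $G=(V,E)$ on $p$ vertices having at least one edge. Let $\vartheta(\overline{G})$ denote the Lovász theta number of the complement $\overline{G}$ of $G$. Then \[ t_{pos}\ge\max\left\{1,\ -\lambda_{min}(A),\ \frac{-p\,\lambda_{min}(A)}{|E|},\ \frac{-p\,\lambda_{min}(A)}{t_{eb}},\ \frac{\lambda_{max}(A)}{\vartheta(\overline{G})-1}\right\}. \]
   Context: $A=(a_{i,j})$ is a self-adjoint $p\times p$ matrix with entries in $\{0,1\}$ and zero diagonal, and $E=\{(i,j): a_{i,j}=1\}$ (ordered pairs), so $G=(V,E)$ is the corresponding simple graph. $\lambda_{min}(A),\lambda_{max}(A)$ are the least and greatest eigenvalues of $A$. $S_A: M_p\to M_p$ is the Schur product map $S_A(X)=(a_{i,j}x_{i,j})$; $tr(X)=\frac1p\mathrm{Tr}(X)$; $\delta(X)=tr(X)I_p$; $\gamma_t=t\delta+S_A$ for real $t$. $t_{pos}=\min\{t:\gamma_t\text{ is a positive map}\}$ and $t_{eb}=\min\{t:\gamma_t\text{ is entanglement breaking}\}$, where $\phi:M_p\to M_p$ is entanglement breaking if $\phi(X)=\sum_k v_kw_k^*Xw_kv_k^*$ for finitely many vectors $w_k,v_k\in\mathbb{C}^p$. The Lovász theta number of $\overline{G}$ may be taken as $\vartheta(\overline{G})=\min\{\lambda_{max}(H): H=H^*\in M_p,\ H_{i,i}=1\ \forall i,\ H_{i,j}=1 \text{ whenever } a_{i,j}=1\}$. *)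

theory Defs
  imports "Jordan_Normal_Form.Schur_Decomposition"
begin

definition self_adjoint :: "complex mat \<Rightarrow> bool" where
  "self_adjoint X \<longleftrightarrow> X = mat_adjoint X"

definition psd :: "complex mat \<Rightarrow> bool" where
  "psd X \<longleftrightarrow> self_adjoint X \<and>
     (\<forall>x \<in> carrier_vec (dim_row X). 0 \<le> Re (conjugate x \<bullet> (X *\<^sub>v x)))"

definition positive_map :: "nat \<Rightarrow> (complex mat \<Rightarrow> complex mat) \<Rightarrow> bool" where
  "positive_map p \<phi> \<longleftrightarrow> (\<forall>X \<in> carrier_mat p p. psd X \<longrightarrow> psd (\<phi> X))"

definition col_mat :: "complex vec \<Rightarrow> complex mat" where
  "col_mat v = mat_of_cols (dim_vec v) [v]"

definition entanglement_breaking :: "nat \<Rightarrow> (complex mat \<Rightarrow> complex mat) \<Rightarrow> bool" where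
  "entanglement_breaking p \<phi> \<longleftrightarrow>
     (\<exists>vw :: (complex vec \<times> complex vec) list.
        (\<forall>(v, w) \<in> set vw. v \<in> carrier_vec p \<and> w \<in> carrier_vec p) \<and>
        (\<forall>X \<in> carrier_mat p p. \<phi> X =
           foldr (\<lambda>M N. M + N) (map (\<lambda>(v, w). col_mat v * mat_adjoint (col_mat w) * X
                                     * col_mat w * mat_adjoint (col_mat v)) vw)
                     (0\<^sub>m p p)))"

definition mtrace :: "complex mat \<Rightarrow> complex" where
  "mtrace X = (\<Sum>i<dim_row X. X $$ (i, i))"

definition ntr :: "nat \<Rightarrow> complex mat \<Rightarrow> complex" where
  "ntr p X = mtrace X / of_nat p"

definition schur_map :: "complex mat \<Rightarrow> complex mat \<Rightarrow> complex mat" where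
  "schur_map A X = mat (dim_row X) (dim_col X) (\<lambda>(i, j). A $$ (i, j) * X $$ (i, j))"

definition delta_map :: "nat \<Rightarrow> complex mat \<Rightarrow> complex mat" where
  "delta_map p X = ntr p X \<cdot>\<^sub>m 1\<^sub>m p"

definition gamma_map :: "nat \<Rightarrow> complex mat \<Rightarrow> real \<Rightarrow> complex mat \<Rightarrow> complex mat" where
  "gamma_map p A t X = complex_of_real t \<cdot>\<^sub>m delta_map p X + schur_map A X"

definition t_pos :: "nat \<Rightarrow> complex mat \<Rightarrow> real" where
  "t_pos p A = Inf {t. positive_map p (gamma_map p A t)}"

definition t_eb :: "nat \<Rightarrow> complex mat \<Rightarrow> real" where
  "t_eb p A = Inf {t. entanglement_breaking p (gamma_map p A t)}"

text \<open>Least / greatest eigenvalue of a self-adjoint matrix (eigenvalues are real).\<close>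
definition lambda_min :: "complex mat \<Rightarrow> real" where
  "lambda_min M = Min (Re ` {c. eigenvalue M c})"

definition lambda_max :: "complex mat \<Rightarrow> real" where
  "lambda_max M = Max (Re ` {c. eigenvalue M c})"

definition adjacency_matrix :: "nat \<Rightarrow> complex mat \<Rightarrow> bool" where
  "adjacency_matrix p A \<longleftrightarrow> A \<in> carrier_mat p p \<and> self_adjoint A \<and>
     (\<forall>i<p. \<forall>j<p. A $$ (i, j) = 0 \<or> A $$ (i, j) = 1) \<and> (\<forall>i<p. A $$ (i, i) = 0)"

text \<open>Edge set E as ordered pairs.\<close>
definition edges :: "nat \<Rightarrow> complex mat \<Rightarrow> (nat \<times> nat) set" where
  "edges p A = {(i, j). i < p \<and> j < p \<and> A $$ (i, j) = 1}"

definition theta_compl :: "nat \<Rightarrow> complex mat \<Rightarrow> real" where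
  "theta_compl p A = Inf {lambda_max H | H. H \<in> carrier_mat p p \<and> self_adjoint H \<and>
      (\<forall>i<p. H $$ (i, i) = 1) \<and> (\<forall>i<p. \<forall>j<p. A $$ (i, j) = 1 \<longrightarrow> H $$ (i, j) = 1)}"

end

theory Submission
  imports Defs
begin

text \<open>Every bound comes from testing positivity of gamma_s on a positive semidefinite X
  against a vector y, that is, from 0 <= y* gamma_s(X) y.  For an edge ij,
  X = (e_i + e_j)(e_i + e_j)* and y = e_i - e_j give s >= p/2 >= 1.  The all-ones matrix and
  an eigenvector for lambda_min(A) give s >= -lambda_min(A); and -lambda_min(A) is at most
  the maximal degree, hence at most |E|/2.  The matrix lambda_max(H) I - H, for H feasible
  in the theta program, and an eigenvector for lambda_max(A) give
  lambda_max(A) <= s (lambda_max(H) - 1).  If gamma_t(X) = sum_k v_k w_k* X w_k v_k* is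
  entanglement breaking, evaluating gamma_t on matrix units pins down the coefficients of
  the v_k and w_k, and testing gamma_s on v_k v_k* against the entrywise products u w_k,
  summed over k, gives s t >= -p lambda_min(A).  Finally gamma_t is entanglement breaking
  for t = p^2, by polarization, so all the infima range over nonempty sets.\<close>

lemma dim_mat_adjoint [simp]:
  "dim_row (mat_adjoint X) = dim_col X" "dim_col (mat_adjoint X) = dim_row X"
  unfolding mat_adjoint_def by (auto simp: mat_of_rows_def)

lemma index_mat_adjoint [simp]:
  "i < dim_col X \<Longrightarrow> j < dim_row X \<Longrightarrow> mat_adjoint X $$ (i, j) = cnj (X $$ (j, i))"
  unfolding mat_adjoint_def by (simp add: mat_of_rows_def)

lemma self_adjoint_iff_hermitian:
  assumes "X \<in> carrier_mat n n"
  shows "self_adjoint X \<longleftrightarrow> (\<forall>i<n. \<forall>j<n. X $$ (i, j) = cnj (X $$ (j, i)))"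
proof
  assume sa: "self_adjoint X"
  show "\<forall>i<n. \<forall>j<n. X $$ (i, j) = cnj (X $$ (j, i))"
  proof (intro allI impI)
    fix i j assume "i < n" "j < n"
    then have "mat_adjoint X $$ (i, j) = cnj (X $$ (j, i))" using assms by simp
    then show "X $$ (i, j) = cnj (X $$ (j, i))" using sa unfolding self_adjoint_def by simp
  qed
next
  assume herm: "\<forall>i<n. \<forall>j<n. X $$ (i, j) = cnj (X $$ (j, i))"
  show "self_adjoint X"
    unfolding self_adjoint_def
  proof (rule eq_matI)
    fix i j assume "i < dim_row (mat_adjoint X)" "j < dim_col (mat_adjoint X)"
    then have "i < n" "j < n" "mat_adjoint X $$ (i, j) = cnj (X $$ (j, i))"
      using assms by auto
    then show "X $$ (i, j) = mat_adjoint X $$ (i, j)" using herm by metis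
  qed (use assms in auto)
qed

lemma self_adjoint_cnj_index:
  assumes "X \<in> carrier_mat n n" "self_adjoint X" "i < n" "j < n"
  shows "cnj (X $$ (i, j)) = X $$ (j, i)"
  using assms by (metis self_adjoint_iff_hermitian complex_cnj_cnj)

subsection \<open>Quadratic forms\<close>

definition quad_form :: "complex mat \<Rightarrow> complex vec \<Rightarrow> complex" where
  "quad_form X z = (\<Sum>i<dim_vec z. \<Sum>j<dim_vec z. cnj (z $ i) * X $$ (i, j) * z $ j)"

definition sq_norm :: "complex vec \<Rightarrow> real" where
  "sq_norm z = (\<Sum>i<dim_vec z. (cmod (z $ i))\<^sup>2)"

lemma quad_form_eq_scalar_prod:
  assumes "X \<in> carrier_mat n n" "z \<in> carrier_vec n"
  shows "conjugate z \<bullet> (X *\<^sub>v z) = quad_form X z"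
  using assms unfolding quad_form_def scalar_prod_def
  by (simp add: lessThan_atLeast0 row_def scalar_prod_def sum_distrib_left mult.assoc)

lemma psd_iff_quad_form:
  assumes "X \<in> carrier_mat n n"
  shows "psd X \<longleftrightarrow> self_adjoint X \<and> (\<forall>z\<in>carrier_vec n. 0 \<le> Re (quad_form X z))"
  using assms unfolding psd_def by (auto simp: quad_form_eq_scalar_prod)

lemma quad_form_hermitian_real:
  assumes "\<And>i j. i < dim_vec z \<Longrightarrow> j < dim_vec z \<Longrightarrow> cnj (X $$ (i, j)) = X $$ (j, i)"
  shows "cnj (quad_form X z) = quad_form X z"
proof -
  have "cnj (quad_form X z) = (\<Sum>i<dim_vec z. \<Sum>j<dim_vec z. cnj (z $ j) * X $$ (j, i) * z $ i)"
    unfolding quad_form_def cnj_sum using assms by (intro sum.cong refl) (simp add: mult_ac)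
  also have "\<dots> = quad_form X z"
    unfolding quad_form_def by (rule sum.swap)
  finally show ?thesis .
qed

lemma sq_norm_nonneg: "0 \<le> sq_norm z"
  unfolding sq_norm_def by (auto intro: sum_nonneg)

lemma sum_cnj_mult_self: "(\<Sum>i<dim_vec z. cnj (z $ i) * z $ i) = of_real (sq_norm z)"
proof -
  have "(\<Sum>i<dim_vec z. z $ i * cnj (z $ i)) = of_real (sq_norm z)"
    unfolding sq_norm_def of_real_sum by (rule sum.cong) (auto simp: complex_norm_square[symmetric])
  then show ?thesis by (simp add: mult.commute)
qed

lemma sq_norm_eq_0_iff: "sq_norm z = 0 \<longleftrightarrow> (\<forall>i<dim_vec z. z $ i = 0)"
  unfolding sq_norm_def by (simp add: sum_nonneg_eq_0_iff lessThan_iff Ball_def)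

lemma sq_norm_pos:
  assumes "u \<in> carrier_vec n" "u \<noteq> 0\<^sub>v n"
  shows "0 < sq_norm u"
proof -
  have "sq_norm u \<noteq> 0"
  proof
    assume "sq_norm u = 0"
    then have "u = 0\<^sub>v n" using assms(1) by (intro eq_vecI) (auto simp: sq_norm_eq_0_iff)
    then show False using assms(2) by simp
  qed
  then show ?thesis using sq_norm_nonneg[of u] by linarith
qed

lemma sq_norm_smult: "sq_norm (c \<cdot>\<^sub>v z) = (cmod c)\<^sup>2 * sq_norm z"
  unfolding sq_norm_def smult_vec_def by (simp add: sum_distrib_left norm_mult power_mult_distrib)

lemma sq_norm_unit_vec:
  assumes "i < n"
  shows "sq_norm (unit_vec n i) = 1"
proof -
  have "sq_norm (unit_vec n i) = (\<Sum>k<n. if k = i then 1 else 0)"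
    unfolding sq_norm_def by (rule sum.cong) (auto simp: unit_vec_def)
  then show ?thesis using assms by simp
qed

lemma cmod_le_sqrt_sq_norm: "i < dim_vec z \<Longrightarrow> cmod (z $ i) \<le> sqrt (sq_norm z)"
  unfolding sq_norm_def by (rule real_le_rsqrt, rule member_le_sum) auto

lemma cmod_mult_le_sq_norm:
  assumes "i < dim_vec z" "j < dim_vec z"
  shows "cmod (z $ i) * cmod (z $ j) \<le> sq_norm z"
proof -
  have "cmod (z $ i) * cmod (z $ j) \<le> sqrt (sq_norm z) * sqrt (sq_norm z)"
    using assms sq_norm_nonneg[of z] by (intro mult_mono cmod_le_sqrt_sq_norm) auto
  then show ?thesis using sq_norm_nonneg[of z] by simp
qed

lemma quad_form_smult: "quad_form X (c \<cdot>\<^sub>v z) = cnj c * c * quad_form X z"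
  unfolding quad_form_def smult_vec_def by (simp add: sum_distrib_left algebra_simps)

lemma sum_sum_delta:
  fixes l m p q :: nat
  assumes "l < p" "m < q"
  shows "(\<Sum>i<p. \<Sum>j<q. if i = l \<and> j = m then G i j else 0) = G l m"
proof -
  have "(\<Sum>i<p. \<Sum>j<q. if i = l \<and> j = m then G i j else 0)
      = (\<Sum>i<p. if i = l then (\<Sum>j<q. if j = m then G i j else 0) else 0)"
    by (intro sum.cong) auto
  then show ?thesis using assms by simp
qed

lemma quad_form_unit_vec:
  assumes "a < n"
  shows "quad_form X (unit_vec n a) = X $$ (a, a)"
proof -
  have "quad_form X (unit_vec n a) = (\<Sum>i<n. \<Sum>j<n. if i = a \<and> j = a then X $$ (i, j) else 0)"
    unfolding quad_form_def by (intro sum.cong) (auto simp: unit_vec_def)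
  then show ?thesis using assms by (simp add: sum_sum_delta)
qed

lemma quad_form_diff:
  assumes "z \<in> carrier_vec n" "w \<in> carrier_vec n"
  shows "quad_form X (vec n (\<lambda>i. z $ i - r * w $ i)) = quad_form X z
     - r * (\<Sum>i<n. \<Sum>j<n. cnj (z $ i) * X $$ (i, j) * w $ j)
     - cnj r * (\<Sum>i<n. \<Sum>j<n. cnj (w $ i) * X $$ (i, j) * z $ j)
     + cnj r * r * quad_form X w"
proof -
  have "quad_form X (vec n (\<lambda>i. z $ i - r * w $ i)) = (\<Sum>i<n. \<Sum>j<n.
      cnj (z $ i) * X $$ (i, j) * z $ j - r * (cnj (z $ i) * X $$ (i, j) * w $ j)
      - cnj r * (cnj (w $ i) * X $$ (i, j) * z $ j) + cnj r * r * (cnj (w $ i) * X $$ (i, j) * w $ j))"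
    unfolding quad_form_def by (intro sum.cong) (auto simp: algebra_simps)
  then show ?thesis using assms unfolding quad_form_def
    by (simp add: sum.distrib sum_subtractf sum_distrib_left)
qed

lemma quad_form_shift:
  assumes "H \<in> carrier_mat n n" "z \<in> carrier_vec n"
  shows "quad_form (c \<cdot>\<^sub>m 1\<^sub>m n - H) z = c * of_real (sq_norm z) - quad_form H z"
proof -
  have "quad_form (c \<cdot>\<^sub>m 1\<^sub>m n - H) z = (\<Sum>i<n. \<Sum>j<n.
      (if i = j then c * (cnj (z $ i) * z $ j) else 0) - cnj (z $ i) * H $$ (i, j) * z $ j)"
    unfolding quad_form_def using assms by (intro sum.cong) (auto simp: algebra_simps)
  also have "\<dots> = c * (\<Sum>i<n. cnj (z $ i) * z $ i) - quad_form H z"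
    using assms unfolding quad_form_def by (simp add: sum_subtractf sum.delta sum_distrib_left)
  finally show ?thesis using sum_cnj_mult_self[of z] assms by simp
qed

definition outer_mat :: "complex vec \<Rightarrow> complex mat" where
  "outer_mat v = mat (dim_vec v) (dim_vec v) (\<lambda>(i, j). v $ i * cnj (v $ j))"

lemma outer_mat_carrier: "v \<in> carrier_vec n \<Longrightarrow> outer_mat v \<in> carrier_mat n n"
  unfolding outer_mat_def by auto

lemma outer_mat_psd:
  assumes "v \<in> carrier_vec n"
  shows "psd (outer_mat v)"
proof -
  have sa: "self_adjoint (outer_mat v)"
    using assms by (subst self_adjoint_iff_hermitian[OF outer_mat_carrier[OF assms]])
      (auto simp: outer_mat_def)
  have "0 \<le> Re (quad_form (outer_mat v) z)" if z: "z \<in> carrier_vec n" for z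
  proof -
    define S where "S = (\<Sum>i<n. cnj (z $ i) * v $ i)"
    have "quad_form (outer_mat v) z = (\<Sum>i<n. \<Sum>j<n. (cnj (z $ i) * v $ i) * cnj (cnj (z $ j) * v $ j))"
      using assms z unfolding quad_form_def outer_mat_def by (auto simp: algebra_simps intro!: sum.cong)
    also have "\<dots> = S * cnj S"
      unfolding S_def cnj_sum sum_product by (rule sum.cong) auto
    finally show ?thesis by (simp add: complex_mult_cnj)
  qed
  then show ?thesis using sa psd_iff_quad_form[OF outer_mat_carrier[OF assms]] by simp
qed

lemma mtrace_outer_mat:
  assumes "v \<in> carrier_vec n"
  shows "mtrace (outer_mat v) = (\<Sum>i<n. v $ i * cnj (v $ i))"
  using assms unfolding mtrace_def outer_mat_def by auto

subsection \<open>The Rayleigh quotient of a Hermitian matrix\<close>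

definition abs_entry_sum :: "complex mat \<Rightarrow> real" where
  "abs_entry_sum X = (\<Sum>i<dim_row X. \<Sum>j<dim_col X. cmod (X $$ (i, j)))"

lemma abs_entry_sum_nonneg: "0 \<le> abs_entry_sum X"
  unfolding abs_entry_sum_def by (auto intro!: sum_nonneg)

lemma cmod_quad_form_le:
  assumes "X \<in> carrier_mat n n" "z \<in> carrier_vec n"
  shows "cmod (quad_form X z) \<le> abs_entry_sum X * sq_norm z"
proof -
  have "cmod (quad_form X z) \<le> (\<Sum>i<n. \<Sum>j<n. cmod (X $$ (i, j)) * (cmod (z $ i) * cmod (z $ j)))"
    unfolding quad_form_def using assms
    by (auto intro!: order_trans[OF norm_sum] sum_mono simp: norm_mult mult_ac)
  also have "\<dots> \<le> (\<Sum>i<n. \<Sum>j<n. cmod (X $$ (i, j)) * sq_norm z)"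
    using assms by (intro sum_mono mult_left_mono cmod_mult_le_sq_norm) auto
  also have "\<dots> = abs_entry_sum X * sq_norm z"
    using assms unfolding abs_entry_sum_def by (simp add: sum_distrib_right)
  finally show ?thesis .
qed

lemma sq_norm_mult_mat_vec_le:
  assumes "L \<in> carrier_mat n n" "w \<in> carrier_vec n"
  shows "sq_norm (L *\<^sub>v w) \<le> (\<Sum>i<n. (\<Sum>j<n. cmod (L $$ (i, j)))\<^sup>2) * sq_norm w"
proof -
  have "(cmod ((L *\<^sub>v w) $ i))\<^sup>2 \<le> (\<Sum>j<n. cmod (L $$ (i, j)))\<^sup>2 * sq_norm w" if i: "i < n" for i
  proof -
    have "cmod ((L *\<^sub>v w) $ i) \<le> (\<Sum>j<n. cmod (L $$ (i, j)) * cmod (w $ j))"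
      using assms i by (auto simp: scalar_prod_def lessThan_atLeast0 norm_mult intro!: order_trans[OF norm_sum])
    also have "\<dots> \<le> (\<Sum>j<n. cmod (L $$ (i, j)) * sqrt (sq_norm w))"
      using assms unfolding sq_norm_def
      by (intro sum_mono mult_left_mono real_le_rsqrt member_le_sum) auto
    finally have "cmod ((L *\<^sub>v w) $ i) \<le> (\<Sum>j<n. cmod (L $$ (i, j))) * sqrt (sq_norm w)"
      by (simp add: sum_distrib_right)
    then have "(cmod ((L *\<^sub>v w) $ i))\<^sup>2 \<le> ((\<Sum>j<n. cmod (L $$ (i, j))) * sqrt (sq_norm w))\<^sup>2"
      by (intro power_mono) auto
    then show ?thesis using sq_norm_nonneg[of w] by (simp add: power_mult_distrib)
  qed
  then have "sq_norm (L *\<^sub>v w) \<le> (\<Sum>i<n. (\<Sum>j<n. cmod (L $$ (i, j)))\<^sup>2 * sq_norm w)"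
    unfolding sq_norm_def using assms by (auto intro!: sum_mono)
  then show ?thesis by (simp add: sum_distrib_right)
qed

lemma sesquilinear_image:
  assumes K: "K \<in> carrier_mat n n" "self_adjoint K" and z: "z \<in> carrier_vec n"
  shows sesquilinear_image_left:
      "(\<Sum>i<n. \<Sum>j<n. cnj ((K *\<^sub>v z) $ i) * K $$ (i, j) * z $ j) = of_real (sq_norm (K *\<^sub>v z))"
    and sesquilinear_image_right:
      "(\<Sum>i<n. \<Sum>j<n. cnj (z $ i) * K $$ (i, j) * (K *\<^sub>v z) $ j) = of_real (sq_norm (K *\<^sub>v z))"
proof -
  define w where "w = K *\<^sub>v z"
  have w: "w \<in> carrier_vec n" unfolding w_def using K z by simp
  have wi: "w $ i = (\<Sum>j<n. K $$ (i, j) * z $ j)" if "i < n" for i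
    unfolding w_def using K z that by (simp add: scalar_prod_def lessThan_atLeast0)
  have herm: "cnj (K $$ (j, i)) = K $$ (i, j)" if "i < n" "j < n" for i j
    using K that by (simp add: self_adjoint_cnj_index)
  have "(\<Sum>i<n. \<Sum>j<n. cnj (w $ i) * K $$ (i, j) * z $ j) = (\<Sum>i<n. cnj (w $ i) * w $ i)"
    by (intro sum.cong) (auto simp: wi sum_distrib_left mult.assoc)
  then show left: "(\<Sum>i<n. \<Sum>j<n. cnj (w $ i) * K $$ (i, j) * z $ j) = of_real (sq_norm w)"
    using sum_cnj_mult_self[of w] w by simp
  have "(\<Sum>i<n. \<Sum>j<n. cnj (z $ i) * K $$ (i, j) * w $ j)
      = cnj (\<Sum>i<n. \<Sum>j<n. cnj (w $ i) * K $$ (i, j) * z $ j)"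
    unfolding cnj_sum by (subst sum.swap) (auto simp: herm algebra_simps intro!: sum.cong)
  then show "(\<Sum>i<n. \<Sum>j<n. cnj (z $ i) * K $$ (i, j) * w $ j) = of_real (sq_norm w)"
    unfolding left by simp
qed

text \<open>For a positive semidefinite K, minimising the nonnegative form at z - r K z over r
  gives the bound on the image of z.\<close>

lemma sq_norm_mult_psd_le:
  assumes K: "K \<in> carrier_mat n n" "self_adjoint K"
    and pos: "\<forall>z\<in>carrier_vec n. 0 \<le> Re (quad_form K z)"
    and z: "z \<in> carrier_vec n"
  shows "sq_norm (K *\<^sub>v z) \<le> (1 + abs_entry_sum K) * Re (quad_form K z)"
proof -
  define w where "w = K *\<^sub>v z"
  have w: "w \<in> carrier_vec n" unfolding w_def using K z by simp
  define M where "M = 1 + abs_entry_sum K"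
  have M: "1 \<le> M" unfolding M_def using abs_entry_sum_nonneg by auto
  define r where "r = 1 / M"
  have "0 \<le> Re (quad_form K (vec n (\<lambda>i. z $ i - of_real r * w $ i)))"
    using pos by auto
  also have "quad_form K (vec n (\<lambda>i. z $ i - of_real r * w $ i)) = quad_form K z
      - 2 * of_real r * of_real (sq_norm w) + of_real r * of_real r * quad_form K w"
    using quad_form_diff[OF z w, of K "of_real r"] sesquilinear_image_left[OF K z]
      sesquilinear_image_right[OF K z]
    unfolding w_def by simp
  finally have h1: "0 \<le> Re (quad_form K z) - 2 * r * sq_norm w + r * r * Re (quad_form K w)"
    by simp
  have "Re (quad_form K w) \<le> abs_entry_sum K * sq_norm w"
    using complex_Re_le_cmod[of "quad_form K w"] cmod_quad_form_le[OF K(1) w] by linarith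
  also have "\<dots> \<le> M * sq_norm w"
    unfolding M_def using sq_norm_nonneg[of w] by (simp add: distrib_right)
  finally have "r * r * Re (quad_form K w) \<le> r * sq_norm w"
    using M unfolding r_def by (simp add: field_simps)
  then have "r * sq_norm w \<le> Re (quad_form K z)" using h1 by linarith
  then show ?thesis
    unfolding r_def M_def[symmetric] w_def[symmetric] using M by (simp add: field_simps)
qed

lemma psd_invertible_coercive:
  assumes K: "K \<in> carrier_mat n n" "self_adjoint K"
    and pos: "\<forall>z\<in>carrier_vec n. 0 \<le> Re (quad_form K z)"
    and L: "L \<in> carrier_mat n n" "L * K = 1\<^sub>m n"
  shows "\<exists>\<delta>>0. \<forall>z\<in>carrier_vec n. \<delta> * sq_norm z \<le> Re (quad_form K z)"
proof -
  define C where "C = (\<Sum>i<n. (\<Sum>j<n. cmod (L $$ (i, j)))\<^sup>2) * (1 + abs_entry_sum K)"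
  have C: "0 \<le> C"
    unfolding C_def using abs_entry_sum_nonneg[of K] by (intro mult_nonneg_nonneg sum_nonneg) auto
  have "sq_norm z \<le> (1 + C) * Re (quad_form K z)" if z: "z \<in> carrier_vec n" for z
  proof -
    have "z = L *\<^sub>v (K *\<^sub>v z)"
      using L K z by (metis assoc_mult_mat_vec one_mult_mat_vec)
    then have "sq_norm z \<le> (\<Sum>i<n. (\<Sum>j<n. cmod (L $$ (i, j)))\<^sup>2) * sq_norm (K *\<^sub>v z)"
      using sq_norm_mult_mat_vec_le[OF L(1), of "K *\<^sub>v z"] K z by simp
    also have "\<dots> \<le> C * Re (quad_form K z)"
      unfolding C_def mult.assoc
      using sq_norm_mult_psd_le[OF K pos z] by (intro mult_left_mono) (auto intro: sum_nonneg)
    also have "\<dots> \<le> (1 + C) * Re (quad_form K z)"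
      using pos z by (simp add: distrib_right)
    finally show ?thesis .
  qed
  moreover have "0 < 1 + C" using C by simp
  ultimately have "\<forall>z\<in>carrier_vec n. 1 / (1 + C) * sq_norm z \<le> Re (quad_form K z)"
    by (simp add: pos_divide_le_eq mult.commute)
  then show ?thesis using \<open>0 < 1 + C\<close> by (intro exI[of _ "1 / (1 + C)"]) auto
qed

lemma not_eigenvalue_shift_left_inverse:
  fixes H :: "'a :: field mat"
  assumes H: "H \<in> carrier_mat n n" and "\<not> eigenvalue H c"
  obtains L where "L \<in> carrier_mat n n" "L * (c \<cdot>\<^sub>m 1\<^sub>m n - H) = 1\<^sub>m n"
proof -
  define D where "D = char_matrix H c"
  have D: "D \<in> carrier_mat n n" "det D \<noteq> 0"
    using assms eigenvalue_det[OF H] unfolding D_def by auto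
  have K: "c \<cdot>\<^sub>m 1\<^sub>m n - H = (-1) \<cdot>\<^sub>m D"
    unfolding D_def char_matrix_def using H by (auto intro!: eq_matI)
  define L where "L = (- 1 / det D) \<cdot>\<^sub>m adj_mat D"
  have "L * (c \<cdot>\<^sub>m 1\<^sub>m n - H) = (- 1 / det D) \<cdot>\<^sub>m (adj_mat D * ((-1) \<cdot>\<^sub>m D))"
    unfolding L_def K using adj_mat(1)[OF D(1)] D(1) by (intro mult_smult_assoc_mat) auto
  also have "\<dots> = 1\<^sub>m n"
    using adj_mat[OF D(1)] D by (auto simp: mult_smult_distrib intro!: eq_matI)
  finally have "L * (c \<cdot>\<^sub>m 1\<^sub>m n - H) = 1\<^sub>m n" .
  moreover have "L \<in> carrier_mat n n" unfolding L_def using adj_mat(1)[OF D(1)] by simp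
  ultimately show ?thesis using that by blast
qed

text \<open>The supremum of the Rayleigh quotient is an eigenvalue: otherwise the positive
  semidefinite matrix \<open>\<mu> I - H\<close> would be invertible, hence coercive, and \<open>\<mu>\<close>
  would not be the least upper bound.\<close>

lemma hermitian_rayleigh_eigenvalue:
  assumes H: "H \<in> carrier_mat n n" "self_adjoint H" and n: "0 < n"
  shows "\<exists>\<mu>. eigenvalue H (of_real \<mu>) \<and> (\<forall>z\<in>carrier_vec n. Re (quad_form H z) \<le> \<mu> * sq_norm z)"
proof -
  define R where "R = {Re (quad_form H z) | z. z \<in> carrier_vec n \<and> sq_norm z = 1}"
  have e0: "unit_vec n 0 \<in> carrier_vec n" "sq_norm (unit_vec n 0) = 1"
    using n by (auto simp: sq_norm_unit_vec)
  then have R_ne: "R \<noteq> {}" unfolding R_def by blast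
  have R_bdd: "bdd_above R"
  proof
    fix x assume "x \<in> R"
    then obtain z where z: "z \<in> carrier_vec n" "sq_norm z = 1" and x: "x = Re (quad_form H z)"
      unfolding R_def by blast
    show "x \<le> abs_entry_sum H"
      using complex_Re_le_cmod[of "quad_form H z"] cmod_quad_form_le[OF H(1) z(1)] x z(2) by simp
  qed
  define \<mu> where "\<mu> = Sup R"
  have ray: "Re (quad_form H z) \<le> \<mu> * sq_norm z" if z: "z \<in> carrier_vec n" for z
  proof (cases "sq_norm z = 0")
    case True
    then have "\<forall>i<dim_vec z. z $ i = 0" by (simp add: sq_norm_eq_0_iff)
    then show ?thesis using True by (simp add: quad_form_def)
  next
    case False
    then have N: "0 < sq_norm z" using sq_norm_nonneg[of z] by linarith
    define c where "c = complex_of_real (1 / sqrt (sq_norm z))"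
    have "sq_norm (c \<cdot>\<^sub>v z) = 1"
      unfolding sq_norm_smult c_def using N by (simp add: norm_divide power_divide)
    then have "Re (quad_form H (c \<cdot>\<^sub>v z)) \<in> R" unfolding R_def using z by auto
    then have "Re (quad_form H (c \<cdot>\<^sub>v z)) \<le> \<mu>" unfolding \<mu>_def using R_bdd by (rule cSup_upper)
    moreover have "cnj c * c = of_real (1 / sq_norm z)" unfolding c_def using N
      by (simp add: power2_eq_square[symmetric] power_divide del: of_real_divide flip: of_real_power)
    ultimately have "Re (quad_form H z) / sq_norm z \<le> \<mu>" unfolding quad_form_smult by simp
    then show ?thesis using N by (simp add: divide_le_eq mult.commute)
  qed
  have "eigenvalue H (of_real \<mu>)"
  proof (rule ccontr)
    assume "\<not> eigenvalue H (of_real \<mu>)"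
    define K where "K = of_real \<mu> \<cdot>\<^sub>m 1\<^sub>m n - H"
    have K: "K \<in> carrier_mat n n" unfolding K_def using H(1) by (rule minus_carrier_mat)
    obtain L where L: "L \<in> carrier_mat n n" and LK: "L * K = 1\<^sub>m n"
      using not_eigenvalue_shift_left_inverse[OF H(1) \<open>\<not> eigenvalue H (of_real \<mu>)\<close>]
      unfolding K_def by blast
    have "self_adjoint K"
      unfolding self_adjoint_iff_hermitian[OF K] using H
      by (auto simp: K_def self_adjoint_cnj_index)
    moreover have qK: "Re (quad_form K z) = \<mu> * sq_norm z - Re (quad_form H z)"
      if "z \<in> carrier_vec n" for z
      unfolding K_def quad_form_shift[OF H(1) that] by simp
    ultimately obtain \<delta> where \<delta>: "0 < \<delta>" "\<forall>z\<in>carrier_vec n. \<delta> * sq_norm z \<le> Re (quad_form K z)"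
      using psd_invertible_coercive[OF K _ _ L LK] ray by fastforce
    have "x \<le> \<mu> - \<delta>" if "x \<in> R" for x
      using that \<delta>(2) qK unfolding R_def by force
    then have "\<mu> \<le> \<mu> - \<delta>" unfolding \<mu>_def using R_ne by (intro cSup_least) (auto simp: \<mu>_def)
    then show False using \<delta>(1) by simp
  qed
  then show ?thesis using ray by blast
qed

lemma finite_eigenvalues:
  fixes H :: "complex mat"
  assumes "H \<in> carrier_mat n n"
  shows "finite {c. eigenvalue H c}"
proof -
  have "char_poly H \<noteq> 0" using degree_monic_char_poly[OF assms] by auto
  then have "finite {c. poly (char_poly H) c = 0}" by (rule poly_roots_finite)
  then show ?thesis using eigenvalue_root_char_poly[OF assms] by simp
qed

lemma hermitian_extreme_eigenvalues:
  assumes "H \<in> carrier_mat n n" "self_adjoint H" "0 < n"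
  shows lambda_max_eigenvalue: "\<exists>c. eigenvalue H c \<and> Re c = lambda_max H"
    and lambda_min_eigenvalue: "\<exists>c. eigenvalue H c \<and> Re c = lambda_min H"
    and quad_form_le_lambda_max: "z \<in> carrier_vec n \<Longrightarrow> Re (quad_form H z) \<le> lambda_max H * sq_norm z"
proof -
  obtain \<mu> where \<mu>: "eigenvalue H (of_real \<mu>)" "\<forall>z\<in>carrier_vec n. Re (quad_form H z) \<le> \<mu> * sq_norm z"
    using hermitian_rayleigh_eigenvalue[OF assms] by blast
  have fin: "finite (Re ` {c. eigenvalue H c})" using finite_eigenvalues[OF assms(1)] by simp
  have mem: "\<mu> \<in> Re ` {c. eigenvalue H c}" using \<mu>(1) by (force intro: image_eqI[of _ _ "of_real \<mu>"])
  then have ne: "Re ` {c. eigenvalue H c} \<noteq> {}" by auto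
  show "\<exists>c. eigenvalue H c \<and> Re c = lambda_max H"
    using Max_in[OF fin ne] unfolding lambda_max_def by auto
  show "\<exists>c. eigenvalue H c \<and> Re c = lambda_min H"
    using Min_in[OF fin ne] unfolding lambda_min_def by auto
  have "\<mu> \<le> lambda_max H" unfolding lambda_max_def using fin mem by simp
  then show "z \<in> carrier_vec n \<Longrightarrow> Re (quad_form H z) \<le> lambda_max H * sq_norm z"
    using \<mu>(2) sq_norm_nonneg by (meson mult_right_mono order_trans)
qed

lemma eigenvalue_quad_form:
  assumes H: "H \<in> carrier_mat n n" and "eigenvalue H c"
  obtains u where "u \<in> carrier_vec n" "0 < sq_norm u"
    "\<forall>i<n. (\<Sum>j<n. H $$ (i, j) * u $ j) = c * u $ i"
    "quad_form H u = c * of_real (sq_norm u)"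
proof -
  obtain u where u: "u \<in> carrier_vec n" "u \<noteq> 0\<^sub>v n" "H *\<^sub>v u = c \<cdot>\<^sub>v u"
    using assms unfolding eigenvalue_def eigenvector_def by auto
  have row: "\<forall>i<n. (\<Sum>j<n. H $$ (i, j) * u $ j) = c * u $ i"
  proof (intro allI impI)
    fix i assume "i < n"
    then have "(H *\<^sub>v u) $ i = (\<Sum>j<n. H $$ (i, j) * u $ j)"
      using H u(1) by (simp add: scalar_prod_def lessThan_atLeast0)
    then show "(\<Sum>j<n. H $$ (i, j) * u $ j) = c * u $ i" using u(3) u(1) \<open>i < n\<close> by simp
  qed
  have "quad_form H u = (\<Sum>i<n. c * (cnj (u $ i) * u $ i))"
    unfolding quad_form_def using u(1) row
    by (auto simp: sum_distrib_left[symmetric] mult.assoc mult.left_commute intro!: sum.cong)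
  also have "\<dots> = c * of_real (sq_norm u)"
    using sum_cnj_mult_self[of u] u(1) by (simp add: sum_distrib_left[symmetric])
  finally show ?thesis using that u(1) sq_norm_pos[OF u(1,2)] row by blast
qed

subsection \<open>Adjacency matrices and the maps \<open>\<gamma>\<^sub>t\<close>\<close>

lemma adjacency_matrixD:
  assumes "adjacency_matrix p A"
  shows adjacency_matrix_carrier: "A \<in> carrier_mat p p"
    and adjacency_matrix_self_adjoint: "self_adjoint A"
    and adjacency_matrix_entry: "i < p \<Longrightarrow> j < p \<Longrightarrow> A $$ (i, j) = 0 \<or> A $$ (i, j) = 1"
    and adjacency_matrix_diag: "i < p \<Longrightarrow> A $$ (i, i) = 0"
    and adjacency_matrix_sym: "i < p \<Longrightarrow> j < p \<Longrightarrow> A $$ (j, i) = A $$ (i, j)"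
proof -
  show A: "A \<in> carrier_mat p p" "self_adjoint A"
    using assms unfolding adjacency_matrix_def by auto
  show entry: "i < p \<Longrightarrow> j < p \<Longrightarrow> A $$ (i, j) = 0 \<or> A $$ (i, j) = 1" for i j
    using assms unfolding adjacency_matrix_def by auto
  show "i < p \<Longrightarrow> A $$ (i, i) = 0"
    using assms unfolding adjacency_matrix_def by auto
  assume ij: "i < p" "j < p"
  then have "A $$ (j, i) = cnj (A $$ (i, j))" using A by (simp add: self_adjoint_cnj_index)
  then show "A $$ (j, i) = A $$ (i, j)" using entry[OF ij] by auto
qed

lemma gamma_map_carrier: "X \<in> carrier_mat p p \<Longrightarrow> gamma_map p A t X \<in> carrier_mat p p"
  unfolding gamma_map_def delta_map_def schur_map_def by auto

lemma gamma_map_index: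
  assumes "X \<in> carrier_mat p p" "i < p" "j < p"
  shows "gamma_map p A t X $$ (i, j)
    = (if i = j then of_real t * ntr p X else 0) + A $$ (i, j) * X $$ (i, j)"
  using assms unfolding gamma_map_def delta_map_def schur_map_def by auto

lemma quad_form_gamma_map:
  assumes "X \<in> carrier_mat p p" "y \<in> carrier_vec p"
  shows "quad_form (gamma_map p A t X) y = of_real t * ntr p X * of_real (sq_norm y)
     + (\<Sum>i<p. \<Sum>j<p. cnj (y $ i) * (A $$ (i, j) * X $$ (i, j)) * y $ j)"
proof -
  have "quad_form (gamma_map p A t X) y = (\<Sum>i<p. \<Sum>j<p.
      (if i = j then of_real t * ntr p X * (cnj (y $ i) * y $ j) else 0)
      + cnj (y $ i) * (A $$ (i, j) * X $$ (i, j)) * y $ j)"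
    unfolding quad_form_def using assms
    by (intro sum.cong refl) (auto simp: gamma_map_index algebra_simps)
  also have "\<dots> = of_real t * ntr p X * (\<Sum>i<p. cnj (y $ i) * y $ i)
      + (\<Sum>i<p. \<Sum>j<p. cnj (y $ i) * (A $$ (i, j) * X $$ (i, j)) * y $ j)"
    by (simp add: sum.distrib sum_distrib_left)
  finally show ?thesis using sum_cnj_mult_self[of y] assms(2) by simp
qed

lemma positive_gamma_map_quad_form:
  assumes "positive_map p (gamma_map p A t)" "X \<in> carrier_mat p p" "psd X" "y \<in> carrier_vec p"
  shows "0 \<le> Re (quad_form (gamma_map p A t X) y)"
  using assms psd_iff_quad_form[OF gamma_map_carrier[OF assms(2)]]
  unfolding positive_map_def by auto

subsection \<open>Entanglement breaking maps\<close>

lemma col_mat_carrier: "v \<in> carrier_vec p \<Longrightarrow> col_mat v \<in> carrier_mat p 1"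
  unfolding col_mat_def by auto

lemma col_mat_index: "i < dim_vec v \<Longrightarrow> col_mat v $$ (i, 0) = v $ i"
  unfolding col_mat_def by (simp add: mat_of_cols_index)

lemma rank_one_term:
  assumes v: "v \<in> carrier_vec p" and w: "w \<in> carrier_vec p" and X: "X \<in> carrier_mat p p"
  shows rank_one_term_carrier:
      "col_mat v * mat_adjoint (col_mat w) * X * col_mat w * mat_adjoint (col_mat v) \<in> carrier_mat p p"
    and rank_one_term_index: "l < p \<Longrightarrow> m < p \<Longrightarrow>
      (col_mat v * mat_adjoint (col_mat w) * X * col_mat w * mat_adjoint (col_mat v)) $$ (l, m)
        = v $ l * quad_form X w * cnj (v $ m)"
proof -
  have cv: "col_mat v \<in> carrier_mat p 1" and cw: "col_mat w \<in> carrier_mat p 1"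
    using v w col_mat_carrier by auto
  have [simp]: "dim_vec v = p" "dim_vec w = p" using v w by auto
  show "col_mat v * mat_adjoint (col_mat w) * X * col_mat w * mat_adjoint (col_mat v) \<in> carrier_mat p p"
    using cv cw X by auto
  have vw: "(col_mat v * mat_adjoint (col_mat w)) $$ (l, b) = v $ l * cnj (w $ b)"
    if "l < p" "b < p" for l b
    using that cv cw by (simp add: scalar_prod_def col_mat_index)
  have vwX: "(col_mat v * mat_adjoint (col_mat w) * X) $$ (l, c) = v $ l * (\<Sum>b<p. cnj (w $ b) * X $$ (b, c))"
    if "l < p" "c < p" for l c
  proof -
    have "(col_mat v * mat_adjoint (col_mat w) * X) $$ (l, c)
        = (\<Sum>b<p. (col_mat v * mat_adjoint (col_mat w)) $$ (l, b) * X $$ (b, c))"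
      using that cv cw X by (simp add: scalar_prod_def lessThan_atLeast0)
    then show ?thesis using that by (simp add: vw sum_distrib_left mult.assoc)
  qed
  have vwXw: "(col_mat v * mat_adjoint (col_mat w) * X * col_mat w) $$ (l, 0) = v $ l * quad_form X w"
    if "l < p" for l
  proof -
    have "(col_mat v * mat_adjoint (col_mat w) * X * col_mat w) $$ (l, 0)
        = (\<Sum>c<p. (col_mat v * mat_adjoint (col_mat w) * X) $$ (l, c) * w $ c)"
      using that cv cw X by (simp add: scalar_prod_def lessThan_atLeast0 col_mat_index)
    also have "\<dots> = v $ l * quad_form X w"
      using that by (simp add: vwX quad_form_def sum_distrib_left sum_distrib_right mult.assoc)
        (subst sum.swap, simp add: algebra_simps)
    finally show ?thesis .
  qed
  show "(col_mat v * mat_adjoint (col_mat w) * X * col_mat w * mat_adjoint (col_mat v)) $$ (l, m)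
      = v $ l * quad_form X w * cnj (v $ m)" if "l < p" "m < p"
  proof -
    have "(col_mat v * mat_adjoint (col_mat w) * X * col_mat w * mat_adjoint (col_mat v)) $$ (l, m)
        = (col_mat v * mat_adjoint (col_mat w) * X * col_mat w) $$ (l, 0) * cnj (v $ m)"
      using that cv cw X by (simp add: scalar_prod_def col_mat_index)
    then show ?thesis using vwXw[OF that(1)] by simp
  qed
qed

lemma foldr_plus_mat:
  assumes "\<forall>x\<in>set xs. f x \<in> carrier_mat p p"
  shows foldr_plus_mat_carrier: "foldr (+) (map f xs) (0\<^sub>m p p) \<in> carrier_mat p p"
    and foldr_plus_mat_index:
      "l < p \<Longrightarrow> m < p \<Longrightarrow> foldr (+) (map f xs) (0\<^sub>m p p) $$ (l, m) = (\<Sum>x\<leftarrow>xs. f x $$ (l, m))"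
  using assms by (induction xs) auto

lemma entanglement_breaking_entries:
  assumes "entanglement_breaking p \<phi>"
  obtains V W :: "nat \<Rightarrow> complex vec" and L :: nat
  where "\<forall>k<L. V k \<in> carrier_vec p \<and> W k \<in> carrier_vec p"
    and "\<forall>X\<in>carrier_mat p p. \<phi> X \<in> carrier_mat p p \<and>
      (\<forall>l<p. \<forall>m<p. \<phi> X $$ (l, m) = (\<Sum>k<L. V k $ l * quad_form X (W k) * cnj (V k $ m)))"
proof -
  obtain vw where vw: "\<forall>(v, w) \<in> set vw. v \<in> carrier_vec p \<and> w \<in> carrier_vec p"
    and \<phi>: "\<forall>X \<in> carrier_mat p p. \<phi> X = foldr (+) (map (\<lambda>(v, w). col_mat v * mat_adjoint (col_mat w)
        * X * col_mat w * mat_adjoint (col_mat v)) vw) (0\<^sub>m p p)"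
    using assms unfolding entanglement_breaking_def by blast
  define V where "V k = fst (vw ! k)" for k
  define W where "W k = snd (vw ! k)" for k
  have VW: "\<forall>k<length vw. V k \<in> carrier_vec p \<and> W k \<in> carrier_vec p"
    using vw unfolding V_def W_def by (metis nth_mem prod.collapse case_prodD)
  have "\<phi> X \<in> carrier_mat p p \<and>
      (\<forall>l<p. \<forall>m<p. \<phi> X $$ (l, m) = (\<Sum>k<length vw. V k $ l * quad_form X (W k) * cnj (V k $ m)))"
    if X: "X \<in> carrier_mat p p" for X
  proof -
    let ?f = "\<lambda>(v, w). col_mat v * mat_adjoint (col_mat w) * X * col_mat w * mat_adjoint (col_mat v)"
    have f: "\<forall>x\<in>set vw. ?f x \<in> carrier_mat p p" using vw rank_one_term_carrier[OF _ _ X] by auto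
    have "\<phi> X $$ (l, m) = (\<Sum>k<length vw. V k $ l * quad_form X (W k) * cnj (V k $ m))"
      if lm: "l < p" "m < p" for l m
    proof -
      have "\<phi> X $$ (l, m) = (\<Sum>k<length vw. ?f (vw ! k) $$ (l, m))"
        using \<phi> X foldr_plus_mat_index[OF f lm] by (simp add: sum_list_sum_nth lessThan_atLeast0)
      also have "\<dots> = (\<Sum>k<length vw. V k $ l * quad_form X (W k) * cnj (V k $ m))"
      proof (rule sum.cong[OF refl])
        fix k assume "k \<in> {..<length vw}"
        moreover have "vw ! k = (V k, W k)" unfolding V_def W_def by simp
        ultimately show "?f (vw ! k) $$ (l, m) = V k $ l * quad_form X (W k) * cnj (V k $ m)"
          using rank_one_term_index[of "V k" p "W k" X l m] VW X lm by simp
      qed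
      finally show ?thesis .
    qed
    then show ?thesis using \<phi> X foldr_plus_mat_carrier[OF f] by simp
  qed
  then show ?thesis using that VW by blast
qed

lemma sum_rotate3:
  "(\<Sum>k\<in>K. \<Sum>n\<in>N. \<Sum>i\<in>I. f k n i) = (\<Sum>n\<in>N. \<Sum>i\<in>I. \<Sum>k\<in>K. f k n i)"
proof -
  have "(\<Sum>k\<in>K. \<Sum>n\<in>N. \<Sum>i\<in>I. f k n i) = (\<Sum>n\<in>N. \<Sum>k\<in>K. \<Sum>i\<in>I. f k n i)"
    by (rule sum.swap)
  also have "\<dots> = (\<Sum>n\<in>N. \<Sum>i\<in>I. \<Sum>k\<in>K. f k n i)"
    by (rule sum.cong[OF refl]) (rule sum.swap)
  finally show ?thesis .
qed

lemma entanglement_breaking_imp_positive_map: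
  assumes "entanglement_breaking p \<phi>"
  shows "positive_map p \<phi>"
  unfolding positive_map_def
proof (intro ballI impI)
  fix X assume X: "X \<in> carrier_mat p p" and "psd X"
  then have X_sa: "self_adjoint X" and X_pos: "\<forall>z\<in>carrier_vec p. 0 \<le> Re (quad_form X z)"
    using psd_iff_quad_form[OF X] by simp_all
  obtain V W :: "nat \<Rightarrow> complex vec" and L :: nat
    where VW: "\<forall>k<L. V k \<in> carrier_vec p \<and> W k \<in> carrier_vec p"
      and \<phi>: "\<forall>X\<in>carrier_mat p p. \<phi> X \<in> carrier_mat p p \<and>
        (\<forall>l<p. \<forall>m<p. \<phi> X $$ (l, m) = (\<Sum>k<L. V k $ l * quad_form X (W k) * cnj (V k $ m)))"
    by (rule entanglement_breaking_entries[OF assms])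
  define q where "q k = quad_form X (W k)" for k
  have q_real: "cnj (q k) = q k" if "k < L" for k
    unfolding q_def using VW that X X_sa
    by (intro quad_form_hermitian_real) (auto simp: self_adjoint_cnj_index)
  have \<phi>X: "\<phi> X \<in> carrier_mat p p" using \<phi> X by blast
  have \<phi>X_index: "\<phi> X $$ (l, m) = (\<Sum>k<L. V k $ l * q k * cnj (V k $ m))" if "l < p" "m < p" for l m
    using \<phi> X that unfolding q_def by simp
  have "self_adjoint (\<phi> X)"
    unfolding self_adjoint_iff_hermitian[OF \<phi>X]
  proof (intro allI impI)
    fix l m assume lm: "l < p" "m < p"
    have "cnj (\<phi> X $$ (m, l)) = (\<Sum>k<L. cnj (V k $ m * q k * cnj (V k $ l)))"
      unfolding \<phi>X_index[OF lm(2,1)] cnj_sum ..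
    also have "\<dots> = \<phi> X $$ (l, m)"
      unfolding \<phi>X_index[OF lm] by (intro sum.cong refl) (simp add: q_real mult_ac)
    finally show "\<phi> X $$ (l, m) = cnj (\<phi> X $$ (m, l))" ..
  qed
  moreover have "0 \<le> Re (quad_form (\<phi> X) z)" if z: "z \<in> carrier_vec p" for z
  proof -
    define S where "S k = (\<Sum>l<p. cnj (z $ l) * V k $ l)" for k
    have "quad_form (\<phi> X) z
        = (\<Sum>l<p. \<Sum>m<p. \<Sum>k<L. q k * ((cnj (z $ l) * V k $ l) * cnj (cnj (z $ m) * V k $ m)))"
      unfolding quad_form_def carrier_vecD[OF z]
    proof (intro sum.cong refl)
      fix l m assume "l \<in> {..<p}" "m \<in> {..<p}"
      then show "cnj (z $ l) * \<phi> X $$ (l, m) * z $ m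
          = (\<Sum>k<L. q k * ((cnj (z $ l) * V k $ l) * cnj (cnj (z $ m) * V k $ m)))"
        unfolding \<phi>X_index[OF \<open>l \<in> {..<p}\<close>[simplified] \<open>m \<in> {..<p}\<close>[simplified]]
        by (simp only: sum_distrib_left sum_distrib_right, intro sum.cong refl, simp add: algebra_simps)
    qed
    also have "\<dots> = (\<Sum>k<L. \<Sum>l<p. \<Sum>m<p. q k * ((cnj (z $ l) * V k $ l) * cnj (cnj (z $ m) * V k $ m)))"
      by (rule sum_rotate3[symmetric])
    also have "\<dots> = (\<Sum>k<L. q k * (S k * cnj (S k)))"
      unfolding S_def cnj_sum sum_product unfolding sum_distrib_left ..
    finally have qf: "quad_form (\<phi> X) z = (\<Sum>k<L. q k * (S k * cnj (S k)))" .
    have "0 \<le> Re (q k * (S k * cnj (S k)))" if "k < L" for k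
    proof -
      have "S k * cnj (S k) = of_real ((cmod (S k))\<^sup>2)" by (rule complex_norm_square[symmetric])
      then show ?thesis using X_pos VW that unfolding q_def by simp
    qed
    then show ?thesis unfolding qf Re_sum by (auto intro: sum_nonneg)
  qed
  ultimately show "psd (\<phi> X)" using psd_iff_quad_form[OF \<phi>X] by blast
qed

subsection \<open>An entanglement breaking \<open>\<gamma>\<^sub>t\<close>\<close>

lemma entanglement_breaking_by_entries:
  assumes vw: "\<forall>(v, w) \<in> set vw. v \<in> carrier_vec p \<and> w \<in> carrier_vec p"
    and \<phi>_carrier: "\<And>X. X \<in> carrier_mat p p \<Longrightarrow> \<phi> X \<in> carrier_mat p p"
    and \<phi>_index: "\<And>X l m. X \<in> carrier_mat p p \<Longrightarrow> l < p \<Longrightarrow> m < p \<Longrightarrow>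
      \<phi> X $$ (l, m) = (\<Sum>x\<leftarrow>vw. fst x $ l * quad_form X (snd x) * cnj (fst x $ m))"
  shows "entanglement_breaking p \<phi>"
proof -
  let ?f = "\<lambda>X (v, w). col_mat v * mat_adjoint (col_mat w) * X * col_mat w * mat_adjoint (col_mat v)"
  have "\<phi> X = foldr (+) (map (?f X) vw) (0\<^sub>m p p)" if X: "X \<in> carrier_mat p p" for X
  proof -
    have f: "\<forall>x\<in>set vw. ?f X x \<in> carrier_mat p p"
      using vw rank_one_term_carrier[OF _ _ X] by auto
    show ?thesis
    proof (rule eq_matI)
      fix l m
      assume "l < dim_row (foldr (+) (map (?f X) vw) (0\<^sub>m p p))"
        and "m < dim_col (foldr (+) (map (?f X) vw) (0\<^sub>m p p))"
      then have lm: "l < p" "m < p" using foldr_plus_mat_carrier[OF f] by auto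
      have "?f X x $$ (l, m) = fst x $ l * quad_form X (snd x) * cnj (fst x $ m)" if "x \<in> set vw" for x
      proof -
        obtain v w where "x = (v, w)" "v \<in> carrier_vec p" "w \<in> carrier_vec p"
          using vw \<open>x \<in> set vw\<close> by (cases x) auto
        then show ?thesis using rank_one_term_index[of v p w X l m] X lm by simp
      qed
      then show "\<phi> X $$ (l, m) = foldr (+) (map (?f X) vw) (0\<^sub>m p p) $$ (l, m)"
        unfolding foldr_plus_mat_index[OF f lm] \<phi>_index[OF X lm]
        by (intro arg_cong[where f = sum_list] map_cong) auto
    qed (use \<phi>_carrier[OF X] foldr_plus_mat_carrier[OF f] in auto)
  qed
  then show ?thesis unfolding entanglement_breaking_def using vw by blast
qed

lemma sum_supported_on_two:
  fixes i j p :: nat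
  assumes "i \<noteq> j" "i < p" "j < p" "\<And>k. k < p \<Longrightarrow> k \<noteq> i \<Longrightarrow> k \<noteq> j \<Longrightarrow> F k = 0"
  shows "(\<Sum>k<p. F k) = F i + F j"
proof -
  have "(\<Sum>k<p. F k) = (\<Sum>k\<in>{i, j}. F k)"
    by (rule sum.mono_neutral_cong_right) (use assms in auto)
  then show ?thesis using assms(1) by simp
qed

lemma sum_list_map_product_upt:
  "sum_list (map F (List.product [0..<p] [0..<q])) = (\<Sum>i<p. \<Sum>j<q. F (i, j))"
proof -
  have "sum_list (map F (List.product xs ys)) = sum_list (map (\<lambda>x. sum_list (map (\<lambda>y. F (x, y)) ys)) xs)"
    for xs ys by (induction xs) (auto simp: comp_def)
  moreover have "sum_list (map g [0..<n]) = (\<Sum>i<n. g i)" for g :: "nat \<Rightarrow> 'a" and n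
    by (simp add: sum_set_upt_conv_sum_list_nat[symmetric] lessThan_atLeast0)
  ultimately show ?thesis by simp
qed

lemma sum_list_map_concat_map:
  "sum_list (map g (concat (map h xs))) = sum_list (map (\<lambda>x. sum_list (map g (h x))) xs)"
  by (induction xs) auto

definition pair_vec :: "nat \<Rightarrow> nat \<Rightarrow> nat \<Rightarrow> complex \<Rightarrow> complex vec" where
  "pair_vec p i j c = vec p (\<lambda>k. if k = i then 1 else if k = j then c else 0)"

lemma pair_vec_carrier: "pair_vec p i j c \<in> carrier_vec p"
  unfolding pair_vec_def by simp

lemma dim_pair_vec [simp]: "dim_vec (pair_vec p i j c) = p"
  unfolding pair_vec_def by simp

lemma pair_vec_index: "k < p \<Longrightarrow> pair_vec p i j c $ k = (if k = i then 1 else if k = j then c else 0)"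
  unfolding pair_vec_def by simp

lemma quad_form_pair_vec:
  assumes ij: "i \<noteq> j" "i < p" "j < p"
  shows "quad_form X (pair_vec p i j c)
    = X $$ (i, i) + c * X $$ (i, j) + cnj c * X $$ (j, i) + cnj c * c * X $$ (j, j)"
proof -
  let ?w = "pair_vec p i j c"
  have "quad_form X ?w = (\<Sum>a<p. \<Sum>b<p. cnj (?w $ a) * X $$ (a, b) * ?w $ b)"
    unfolding quad_form_def pair_vec_def by simp
  also have "\<dots> = (\<Sum>b<p. cnj (?w $ i) * X $$ (i, b) * ?w $ b) + (\<Sum>b<p. cnj (?w $ j) * X $$ (j, b) * ?w $ b)"
    using ij by (intro sum_supported_on_two) (auto simp: pair_vec_index)
  also have "\<dots> = cnj (?w $ i) * X $$ (i, i) * ?w $ i + cnj (?w $ i) * X $$ (i, j) * ?w $ j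
      + (cnj (?w $ j) * X $$ (j, i) * ?w $ i + cnj (?w $ j) * X $$ (j, j) * ?w $ j)"
    using ij by (intro arg_cong2[where f = "(+)"] sum_supported_on_two) (auto simp: pair_vec_index)
  finally show ?thesis using ij by (simp add: pair_vec_index algebra_simps)
qed

definition phases :: "complex list" where
  "phases = [1, \<i>, -1, -\<i>]"

text \<open>Polarization: averaging the rank one terms of \<open>e\<^sub>i + c e\<^sub>j\<close> over the fourth roots of
  unity \<open>c\<close> isolates the entries \<open>X\<^sub>i\<^sub>j\<close> and \<open>X\<^sub>j\<^sub>i\<close>.\<close>

lemma polarization_pair_vec:
  assumes ij: "i \<noteq> j" "i < p" "j < p" and lm: "l < p" "m < p"
  shows "(\<Sum>c\<leftarrow>phases. pair_vec p i j c $ l * quad_form X (pair_vec p i j c) * cnj (pair_vec p i j c $ m))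
   = 4 * ((if l = i \<and> m = j then X $$ (i, j) else 0) + (if l = j \<and> m = i then X $$ (j, i) else 0)
          + (if l = m \<and> (l = i \<or> l = j) then X $$ (i, i) + X $$ (j, j) else 0))"
  unfolding phases_def using ij lm
  apply (simp only: sum_list.Cons sum_list.Nil list.map quad_form_pair_vec[OF ij]
      pair_vec_index[OF lm(1)] pair_vec_index[OF lm(2)])
  apply (cases "l = i"; cases "l = j"; cases "m = i"; cases "m = j")
         apply (simp_all add: algebra_simps)
  done

text \<open>The decomposition of \<open>\<gamma>\<^sub>t\<close> for \<open>t = p\<^sup>2\<close>: one polarization family per ordered edge
  produces \<open>A\<^sub>l\<^sub>m X\<^sub>l\<^sub>m\<close> together with some diagonal terms, and the rank one terms of
  \<open>diag_pairs\<close>, whose weights are nonnegative because \<open>p\<close> bounds every degree, top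
  up the diagonal to \<open>p tr X\<close>.\<close>

definition vertex_degree :: "nat \<Rightarrow> complex mat \<Rightarrow> nat \<Rightarrow> real" where
  "vertex_degree p A l = (\<Sum>j<p. Re (A $$ (l, j)))"

definition diag_weight :: "nat \<Rightarrow> complex mat \<Rightarrow> nat \<Rightarrow> nat \<Rightarrow> real" where
  "diag_weight p A a l = real p - (if a = l then vertex_degree p A l else Re (A $$ (a, l)))"

definition edge_pairs :: "nat \<Rightarrow> complex mat \<Rightarrow> (complex vec \<times> complex vec) list" where
  "edge_pairs p A = concat (map (\<lambda>(i, j). map (\<lambda>c.
      (of_real (sqrt (Re (A $$ (i, j)) / 8)) \<cdot>\<^sub>v pair_vec p i j c, pair_vec p i j c)) phases)
    (List.product [0..<p] [0..<p]))"

definition diag_pairs :: "nat \<Rightarrow> complex mat \<Rightarrow> (complex vec \<times> complex vec) list" where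
  "diag_pairs p A = map (\<lambda>(a, l). (of_real (sqrt (diag_weight p A a l)) \<cdot>\<^sub>v unit_vec p l, unit_vec p a))
    (List.product [0..<p] [0..<p])"

lemma adjacency_matrix_Re:
  assumes "adjacency_matrix p A" "i < p" "j < p"
  shows "of_real (Re (A $$ (i, j))) = A $$ (i, j)" "0 \<le> Re (A $$ (i, j))" "Re (A $$ (i, j)) \<le> 1"
  using adjacency_matrix_entry[OF assms] by auto

lemma sum_edge_pairs:
  assumes adj: "adjacency_matrix p A" and lm: "l < p" "m < p"
  shows "(\<Sum>x\<leftarrow>edge_pairs p A. fst x $ l * quad_form X (snd x) * cnj (fst x $ m))
    = (\<Sum>i<p. \<Sum>j<p. A $$ (i, j) / 2 * ((if l = i \<and> m = j then X $$ (i, j) else 0)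
        + (if l = j \<and> m = i then X $$ (j, i) else 0)
        + (if l = m \<and> (l = i \<or> l = j) then X $$ (i, i) + X $$ (j, j) else 0)))"
proof -
  have pair: "(\<Sum>c\<leftarrow>phases. (of_real (sqrt (Re (A $$ (i, j)) / 8)) \<cdot>\<^sub>v pair_vec p i j c) $ l
        * quad_form X (pair_vec p i j c) * cnj ((of_real (sqrt (Re (A $$ (i, j)) / 8)) \<cdot>\<^sub>v pair_vec p i j c) $ m))
      = A $$ (i, j) / 2 * ((if l = i \<and> m = j then X $$ (i, j) else 0)
        + (if l = j \<and> m = i then X $$ (j, i) else 0)
        + (if l = m \<and> (l = i \<or> l = j) then X $$ (i, i) + X $$ (j, j) else 0))"
    if ij: "i < p" "j < p" for i j
  proof -
    define e where "e = sqrt (Re (A $$ (i, j)) / 8)"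
    have "e * e = Re (A $$ (i, j)) / 8"
      unfolding e_def using adjacency_matrix_Re(2)[OF adj ij] by simp
    then have e: "of_real e * of_real e = A $$ (i, j) / 8"
      using adjacency_matrix_Re(1)[OF adj ij] by (metis of_real_mult of_real_divide of_real_numeral)
    have "(\<Sum>c\<leftarrow>phases. (of_real e \<cdot>\<^sub>v pair_vec p i j c) $ l * quad_form X (pair_vec p i j c)
          * cnj ((of_real e \<cdot>\<^sub>v pair_vec p i j c) $ m))
        = (\<Sum>c\<leftarrow>phases. (of_real e * of_real e)
          * (pair_vec p i j c $ l * quad_form X (pair_vec p i j c) * cnj (pair_vec p i j c $ m)))"
      using lm by (intro arg_cong[where f = sum_list] map_cong refl)
        (simp add: pair_vec_carrier[THEN carrier_vecD] algebra_simps)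
    also have "\<dots> = A $$ (i, j) / 8 * (\<Sum>c\<leftarrow>phases. pair_vec p i j c $ l
        * quad_form X (pair_vec p i j c) * cnj (pair_vec p i j c $ m))"
      unfolding e by (rule sum_list_const_mult)
    finally have sum: "(\<Sum>c\<leftarrow>phases. (of_real e \<cdot>\<^sub>v pair_vec p i j c) $ l
          * quad_form X (pair_vec p i j c) * cnj ((of_real e \<cdot>\<^sub>v pair_vec p i j c) $ m))
        = A $$ (i, j) / 8 * (\<Sum>c\<leftarrow>phases. pair_vec p i j c $ l
          * quad_form X (pair_vec p i j c) * cnj (pair_vec p i j c $ m))" .
    show ?thesis
    proof (cases "i = j")
      case True
      then show ?thesis
        unfolding e_def[symmetric] sum using adjacency_matrix_diag[OF adj ij(1)] by simp
    next
      case False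
      have "A $$ (i, j) / 8 * (4 * T) = A $$ (i, j) / 2 * T" for T :: complex
        by (simp add: field_simps)
      then show ?thesis
        unfolding e_def[symmetric] sum polarization_pair_vec[OF False ij lm] .
    qed
  qed
  have "(\<Sum>x\<leftarrow>edge_pairs p A. fst x $ l * quad_form X (snd x) * cnj (fst x $ m))
    = (\<Sum>i<p. \<Sum>j<p. \<Sum>c\<leftarrow>phases. (of_real (sqrt (Re (A $$ (i, j)) / 8)) \<cdot>\<^sub>v pair_vec p i j c) $ l
        * quad_form X (pair_vec p i j c) * cnj ((of_real (sqrt (Re (A $$ (i, j)) / 8)) \<cdot>\<^sub>v pair_vec p i j c) $ m))"
    unfolding edge_pairs_def sum_list_map_concat_map by (simp add: sum_list_map_product_upt comp_def)
  also have "\<dots> = (\<Sum>i<p. \<Sum>j<p. A $$ (i, j) / 2 * ((if l = i \<and> m = j then X $$ (i, j) else 0)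
        + (if l = j \<and> m = i then X $$ (j, i) else 0)
        + (if l = m \<and> (l = i \<or> l = j) then X $$ (i, i) + X $$ (j, j) else 0)))"
    by (intro sum.cong refl) (simp add: pair)
  finally show ?thesis .
qed

lemma sum_diag_pairs:
  assumes adj: "adjacency_matrix p A" and X: "X \<in> carrier_mat p p" and lm: "l < p" "m < p"
  shows "(\<Sum>x\<leftarrow>diag_pairs p A. fst x $ l * quad_form X (snd x) * cnj (fst x $ m))
    = (if l = m then (\<Sum>a<p. (of_nat p - (if a = l then (\<Sum>j<p. A $$ (l, j)) else A $$ (a, l)))
        * X $$ (a, a)) else 0)"
proof -
  have weight: "of_real (sqrt (diag_weight p A a q)) * of_real (sqrt (diag_weight p A a q))
      = of_nat p - (if a = q then (\<Sum>j<p. A $$ (q, j)) else A $$ (a, q))"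
    if "a < p" "q < p" for a q
  proof -
    have "vertex_degree p A q \<le> (\<Sum>j<p. 1)"
      unfolding vertex_degree_def using adjacency_matrix_Re(3)[OF adj \<open>q < p\<close>]
      by (intro sum_mono) auto
    then have "0 \<le> diag_weight p A a q"
      unfolding diag_weight_def using adjacency_matrix_Re[OF adj that] that by auto
    moreover have "of_real (vertex_degree p A q) = (\<Sum>j<p. A $$ (q, j))"
      unfolding vertex_degree_def of_real_sum using adjacency_matrix_Re(1)[OF adj \<open>q < p\<close>] by simp
    ultimately show ?thesis
      unfolding diag_weight_def using adjacency_matrix_Re(1)[OF adj that]
      by (auto simp flip: of_real_mult)
  qed
  have "(\<Sum>x\<leftarrow>diag_pairs p A. fst x $ l * quad_form X (snd x) * cnj (fst x $ m))
      = (\<Sum>a<p. \<Sum>q<p. (of_real (sqrt (diag_weight p A a q)) \<cdot>\<^sub>v unit_vec p q) $ l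
          * quad_form X (unit_vec p a) * cnj ((of_real (sqrt (diag_weight p A a q)) \<cdot>\<^sub>v unit_vec p q) $ m))"
    unfolding diag_pairs_def by (simp add: sum_list_map_product_upt comp_def)
  also have "\<dots> = (\<Sum>a<p. \<Sum>q<p. if q = l then (if m = l then
          of_real (sqrt (diag_weight p A a q)) * of_real (sqrt (diag_weight p A a q)) * X $$ (a, a)
          else 0) else 0)"
    using lm by (intro sum.cong refl) (auto simp: quad_form_unit_vec)
  also have "\<dots> = (if l = m then (\<Sum>a<p. (of_nat p - (if a = l then (\<Sum>j<p. A $$ (l, j)) else A $$ (a, l)))
        * X $$ (a, a)) else 0)"
    using lm weight by (auto intro!: sum.cong)
  finally show ?thesis .
qed

lemma sum_edge_diagonal_terms:
  fixes a x :: "nat \<Rightarrow> nat \<Rightarrow> complex" and l p :: nat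
  assumes l: "l < p" and sym: "\<And>i j. i < p \<Longrightarrow> j < p \<Longrightarrow> a j i = a i j"
    and diag: "\<And>i. i < p \<Longrightarrow> a i i = 0"
  shows "(\<Sum>i<p. \<Sum>j<p. a i j / 2 * (if l = i \<or> l = j then x i i + x j j else 0))
    = (\<Sum>j<p. a l j) * x l l + (\<Sum>j<p. a l j * x j j)"
proof -
  have "(\<Sum>i<p. \<Sum>j<p. a i j / 2 * (if l = i \<or> l = j then x i i + x j j else 0))
      = (\<Sum>i<p. \<Sum>j<p. (if i = l then a i j / 2 * (x i i + x j j) else 0)
          + (if j = l then a i j / 2 * (x i i + x j j) else 0))"
    using diag by (intro sum.cong refl) auto
  also have "\<dots> = (\<Sum>j<p. a l j / 2 * (x l l + x j j)) + (\<Sum>i<p. a i l / 2 * (x i i + x l l))"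
    using l by (simp add: sum.distrib) (subst sum.swap, simp)
  also have "\<dots> = (\<Sum>j<p. a l j / 2 * (x l l + x j j)) + (\<Sum>j<p. a l j / 2 * (x l l + x j j))"
    using sym l by (intro arg_cong2[where f = "(+)"] refl sum.cong) (auto simp: algebra_simps)
  also have "\<dots> = (\<Sum>j<p. a l j * x l l + a l j * x j j)"
    by (simp only: sum.distrib[symmetric]) (intro sum.cong refl, simp add: field_simps)
  finally show ?thesis by (simp add: sum.distrib sum_distrib_right)
qed

lemma edge_diag_entry_identity:
  fixes a x :: "nat \<Rightarrow> nat \<Rightarrow> complex" and l m p :: nat
  assumes lm: "l < p" "m < p" and sym: "\<And>i j. i < p \<Longrightarrow> j < p \<Longrightarrow> a j i = a i j"
    and diag: "\<And>i. i < p \<Longrightarrow> a i i = 0"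
  shows "(\<Sum>i<p. \<Sum>j<p. a i j / 2 * ((if l = i \<and> m = j then x i j else 0)
        + (if l = j \<and> m = i then x j i else 0)
        + (if l = m \<and> (l = i \<or> l = j) then x i i + x j j else 0)))
      + (if l = m then (\<Sum>q<p. (of_nat p - (if q = l then (\<Sum>j<p. a l j) else a q l)) * x q q) else 0)
    = (if l = m then of_nat p * (\<Sum>q<p. x q q) else 0) + a l m * x l m"
proof -
  have "(\<Sum>i<p. \<Sum>j<p. a i j / 2 * (if l = i \<and> m = j then x i j else 0))
      = (\<Sum>i<p. \<Sum>j<p. if i = l \<and> j = m then a i j / 2 * x i j else 0)"
    by (intro sum.cong refl) auto
  also have "\<dots> = a l m / 2 * x l m" using lm by (rule sum_sum_delta)
  finally have first: "(\<Sum>i<p. \<Sum>j<p. a i j / 2 * (if l = i \<and> m = j then x i j else 0)) = a l m / 2 * x l m" .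
  have "(\<Sum>i<p. \<Sum>j<p. a i j / 2 * (if l = j \<and> m = i then x j i else 0))
      = (\<Sum>i<p. \<Sum>j<p. if i = m \<and> j = l then a i j / 2 * x j i else 0)"
    by (intro sum.cong refl) auto
  also have "\<dots> = a l m / 2 * x l m"
    using sum_sum_delta[OF lm(2,1), of "\<lambda>i j. a i j / 2 * x j i"] sym[OF lm] by simp
  finally have second: "(\<Sum>i<p. \<Sum>j<p. a i j / 2 * (if l = j \<and> m = i then x j i else 0)) = a l m / 2 * x l m" .
  have diagonal: "(\<Sum>i<p. \<Sum>j<p. a i j / 2 * (if l = m \<and> (l = i \<or> l = j) then x i i + x j j else 0))
      = (if l = m then (\<Sum>j<p. a l j) * x l l + (\<Sum>j<p. a l j * x j j) else 0)"
    using sum_edge_diagonal_terms[OF lm(1) sym diag, of _ x] by (cases "l = m") simp_all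
  have fill: "(\<Sum>q<p. (of_nat p - (if q = l then (\<Sum>j<p. a l j) else a q l)) * x q q)
      = of_nat p * (\<Sum>q<p. x q q) - (\<Sum>j<p. a l j) * x l l - (\<Sum>j<p. a l j * x j j)"
  proof -
    have "(\<Sum>q<p. (of_nat p - (if q = l then (\<Sum>j<p. a l j) else a q l)) * x q q)
        = (\<Sum>q<p. of_nat p * x q q - (if q = l then (\<Sum>j<p. a l j) * x l l else 0) - a l q * x q q)"
      using sym diag lm by (intro sum.cong refl) (auto simp: algebra_simps)
    then show ?thesis using lm by (simp add: sum_subtractf sum_distrib_left)
  qed
  show ?thesis
    unfolding distrib_left sum.distrib first second diagonal fill
    by (cases "l = m") (auto simp: diag lm)
qed

lemma gamma_map_entanglement_breaking:
  assumes adj: "adjacency_matrix p A" and p: "0 < p"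
  shows "entanglement_breaking p (gamma_map p A (real p * real p))"
proof (rule entanglement_breaking_by_entries)
  show "\<forall>(v, w) \<in> set (edge_pairs p A @ diag_pairs p A). v \<in> carrier_vec p \<and> w \<in> carrier_vec p"
    unfolding edge_pairs_def diag_pairs_def by (auto simp: pair_vec_carrier)
  fix X :: "complex mat" and l m assume X: "X \<in> carrier_mat p p" and lm: "l < p" "m < p"
  have trace: "of_nat p * (\<Sum>q<p. X $$ (q, q)) = of_real (real p * real p) * ntr p X"
    unfolding ntr_def mtrace_def using X p by simp
  have "gamma_map p A (real p * real p) X $$ (l, m)
      = (if l = m then of_nat p * (\<Sum>q<p. X $$ (q, q)) else 0) + A $$ (l, m) * X $$ (l, m)"
    unfolding gamma_map_index[OF X lm] trace ..
  also have "\<dots> = (\<Sum>x\<leftarrow>edge_pairs p A. fst x $ l * quad_form X (snd x) * cnj (fst x $ m))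
      + (\<Sum>x\<leftarrow>diag_pairs p A. fst x $ l * quad_form X (snd x) * cnj (fst x $ m))"
    unfolding sum_edge_pairs[OF adj lm] sum_diag_pairs[OF adj X lm]
    by (rule edge_diag_entry_identity[symmetric, OF lm])
      (auto simp: adjacency_matrix_sym[OF adj] adjacency_matrix_diag[OF adj])
  finally show "gamma_map p A (real p * real p) X $$ (l, m)
      = (\<Sum>x\<leftarrow>edge_pairs p A @ diag_pairs p A. fst x $ l * quad_form X (snd x) * cnj (fst x $ m))"
    by simp
qed (rule gamma_map_carrier)

subsection \<open>Lower bounds for the parameters of positive \<open>\<gamma>\<^sub>t\<close>\<close>

lemma positive_gamma_map_ge_half_dim:
  assumes adj: "adjacency_matrix p A" and ij: "i < p" "j < p" "A $$ (i, j) = 1"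
    and s: "positive_map p (gamma_map p A s)"
  shows "real p / 2 \<le> s"
proof -
  have "i \<noteq> j" using adjacency_matrix_diag[OF adj ij(1)] ij(3) by auto
  have Aji: "A $$ (j, i) = 1" using adjacency_matrix_sym[OF adj ij(1,2)] ij(3) by simp
  define v where "v = pair_vec p i j 1"
  define X where "X = outer_mat v"
  have v: "v \<in> carrier_vec p" unfolding v_def by (rule pair_vec_carrier)
  have X: "X \<in> carrier_mat p p" unfolding X_def using v by (rule outer_mat_carrier)
  have "psd X" unfolding X_def by (rule outer_mat_psd[OF v])
  have "0 \<le> Re (quad_form (gamma_map p A s X) (pair_vec p i j (-1)))"
    by (rule positive_gamma_map_quad_form[OF s X \<open>psd X\<close> pair_vec_carrier])
  also have "quad_form (gamma_map p A s X) (pair_vec p i j (-1)) = gamma_map p A s X $$ (i, i)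
      - gamma_map p A s X $$ (i, j) - gamma_map p A s X $$ (j, i) + gamma_map p A s X $$ (j, j)"
    using quad_form_pair_vec[OF \<open>i \<noteq> j\<close> ij(1,2)] by simp
  also have "\<dots> = 2 * (of_real s * ntr p X) - 2"
    using X ij \<open>i \<noteq> j\<close> Aji adjacency_matrix_diag[OF adj]
    unfolding X_def outer_mat_def v_def by (simp add: gamma_map_index pair_vec_index)
  also have "ntr p X = 2 / of_nat p"
  proof -
    have "(\<Sum>k<p. v $ k * cnj (v $ k)) = v $ i * cnj (v $ i) + v $ j * cnj (v $ j)"
      using ij \<open>i \<noteq> j\<close> by (intro sum_supported_on_two) (auto simp: v_def pair_vec_index)
    then show ?thesis
      using ij \<open>i \<noteq> j\<close> unfolding ntr_def X_def mtrace_outer_mat[OF v] by (simp add: v_def pair_vec_index)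
  qed
  finally have "0 \<le> 4 * s / real p - 2" by simp
  then show ?thesis using ij by (simp add: field_simps)
qed

lemma positive_gamma_map_ge_neg_lambda_min:
  assumes adj: "adjacency_matrix p A" and p: "0 < p"
    and s: "positive_map p (gamma_map p A s)"
  shows "- lambda_min A \<le> s"
proof -
  note A = adjacency_matrix_carrier[OF adj] adjacency_matrix_self_adjoint[OF adj]
  obtain c where c: "eigenvalue A c" "Re c = lambda_min A"
    using lambda_min_eigenvalue[OF A p] by blast
  obtain u where u: "u \<in> carrier_vec p" "0 < sq_norm u" "quad_form A u = c * of_real (sq_norm u)"
    using eigenvalue_quad_form[OF A(1) c(1)] by metis
  define v where "v = vec p (\<lambda>_. 1::complex)"
  have v: "v \<in> carrier_vec p" unfolding v_def by simp
  have X: "outer_mat v \<in> carrier_mat p p" using v by (rule outer_mat_carrier)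
  have "0 \<le> Re (quad_form (gamma_map p A s (outer_mat v)) u)"
    using positive_gamma_map_quad_form[OF s X outer_mat_psd[OF v] u(1)] .
  also have "quad_form (gamma_map p A s (outer_mat v)) u = (of_real s + c) * of_real (sq_norm u)"
  proof -
    have "ntr p (outer_mat v) = 1" unfolding ntr_def mtrace_outer_mat[OF v] using p by (simp add: v_def)
    moreover have "(\<Sum>i<p. \<Sum>j<p. cnj (u $ i) * (A $$ (i, j) * outer_mat v $$ (i, j)) * u $ j) = quad_form A u"
      unfolding quad_form_def using u(1) by (intro sum.cong refl) (auto simp: outer_mat_def v_def)
    ultimately show ?thesis unfolding quad_form_gamma_map[OF X u(1)] u(3) by (simp add: algebra_simps)
  qed
  finally have "0 \<le> (s + Re c) * sq_norm u" by simp
  then show ?thesis using u(2) c(2) by (simp add: zero_le_mult_iff)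
qed

lemma positive_gamma_map_lambda_max_le:
  assumes adj: "adjacency_matrix p A" and p: "0 < p"
    and s: "positive_map p (gamma_map p A s)"
    and H: "H \<in> carrier_mat p p" "self_adjoint H" "\<forall>i<p. H $$ (i, i) = 1"
      "\<forall>i<p. \<forall>j<p. A $$ (i, j) = 1 \<longrightarrow> H $$ (i, j) = 1"
  shows "lambda_max A \<le> s * (lambda_max H - 1)"
proof -
  note A = adjacency_matrix_carrier[OF adj] adjacency_matrix_self_adjoint[OF adj]
  define \<mu> where "\<mu> = lambda_max H"
  define Y where "Y = of_real \<mu> \<cdot>\<^sub>m 1\<^sub>m p - H"
  have Y: "Y \<in> carrier_mat p p" unfolding Y_def using H(1) by (rule minus_carrier_mat)
  have Y_index: "Y $$ (i, j) = (if i = j then of_real \<mu> else 0) - H $$ (i, j)" if "i < p" "j < p" for i j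
    unfolding Y_def using that H(1) by simp
  have "self_adjoint Y"
    unfolding self_adjoint_iff_hermitian[OF Y] using H(1,2) by (auto simp: Y_index self_adjoint_cnj_index)
  moreover have "\<forall>z\<in>carrier_vec p. 0 \<le> Re (quad_form Y z)"
    using quad_form_le_lambda_max[OF H(1,2) p] unfolding Y_def \<mu>_def by (auto simp: quad_form_shift[OF H(1)])
  ultimately have "psd Y" using psd_iff_quad_form[OF Y] by blast
  obtain c where c: "eigenvalue A c" "Re c = lambda_max A"
    using lambda_max_eigenvalue[OF A p] by blast
  obtain u where u: "u \<in> carrier_vec p" "0 < sq_norm u" "quad_form A u = c * of_real (sq_norm u)"
    using eigenvalue_quad_form[OF A(1) c(1)] by metis
  have "0 \<le> Re (quad_form (gamma_map p A s Y) u)"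
    using positive_gamma_map_quad_form[OF s Y \<open>psd Y\<close> u(1)] .
  also have "quad_form (gamma_map p A s Y) u = (of_real s * of_real (\<mu> - 1) - c) * of_real (sq_norm u)"
  proof -
    have tr: "ntr p Y = of_real (\<mu> - 1)"
      unfolding ntr_def mtrace_def using Y H(3) p by (simp add: Y_index)
    moreover have "A $$ (i, j) * Y $$ (i, j) = - A $$ (i, j)" if "i < p" "j < p" for i j
      using adjacency_matrix_entry[OF adj that] adjacency_matrix_diag[OF adj] H(4) that
      by (cases "i = j") (auto simp: Y_index)
    then have schur: "(\<Sum>i<p. \<Sum>j<p. cnj (u $ i) * (A $$ (i, j) * Y $$ (i, j)) * u $ j) = - quad_form A u"
      unfolding quad_form_def using u(1) by (simp add: sum_negf[symmetric])
    show ?thesis unfolding quad_form_gamma_map[OF Y u(1)] tr schur u(3) by (simp add: algebra_simps)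
  qed
  finally have "0 \<le> (s * (\<mu> - 1) - Re c) * sq_norm u" by simp
  then show ?thesis using u(2) c(2) unfolding \<mu>_def by (simp add: zero_le_mult_iff)
qed

lemma adjacency_eigenvalue_le_degree:
  assumes adj: "adjacency_matrix p A" and c: "eigenvalue A c"
  obtains k where "k < p" "cmod c \<le> real (card {j. j < p \<and> A $$ (k, j) = 1})"
proof -
  obtain u where u: "u \<in> carrier_vec p" "0 < sq_norm u" "\<forall>i<p. (\<Sum>j<p. A $$ (i, j) * u $ j) = c * u $ i"
    using eigenvalue_quad_form[OF adjacency_matrix_carrier[OF adj] c] by metis
  have "p \<noteq> 0"
  proof
    assume "p = 0"
    then show False using u(1,2) by (simp add: sq_norm_def)
  qed
  define M where "M = Max ((\<lambda>j. cmod (u $ j)) ` {..<p})"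
  have "M \<in> (\<lambda>j. cmod (u $ j)) ` {..<p}"
    unfolding M_def using \<open>p \<noteq> 0\<close> by (intro Max_in) auto
  then obtain k where k: "k < p" "cmod (u $ k) = M" by auto
  have M_ge: "cmod (u $ j) \<le> M" if "j < p" for j
    unfolding M_def using that by (intro Max_ge) auto
  have "0 < M"
  proof (rule ccontr)
    assume "\<not> 0 < M"
    then have "u $ j = 0" if "j < p" for j
      using M_ge[OF that] by (metis norm_le_zero_iff not_less order_trans)
    then have "sq_norm u = 0" using u(1) by (simp add: sq_norm_eq_0_iff)
    then show False using u(2) by simp
  qed
  have "cmod c * M = cmod (\<Sum>j<p. A $$ (k, j) * u $ j)" using u(3) k by (simp add: norm_mult)
  also have "\<dots> \<le> (\<Sum>j<p. if A $$ (k, j) = 1 then M else 0)"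
    using adjacency_matrix_entry[OF adj k(1)] M_ge
    by (intro order_trans[OF norm_sum] sum_mono) (fastforce simp: norm_mult)
  also have "\<dots> = real (card {j. j < p \<and> A $$ (k, j) = 1}) * M"
    by (simp add: sum.If_cases Int_def)
  finally show ?thesis using that k(1) \<open>0 < M\<close> by simp
qed

lemma finite_edges: "finite (edges p A)"
  by (rule finite_subset[of _ "{..<p} \<times> {..<p}"]) (auto simp: edges_def)

lemma two_degree_le_card_edges:
  assumes adj: "adjacency_matrix p A" and k: "k < p"
  shows "2 * card {j. j < p \<and> A $$ (k, j) = 1} \<le> card (edges p A)"
proof -
  define N where "N = {j. j < p \<and> A $$ (k, j) = 1}"
  have "Pair k ` N \<union> (\<lambda>j. (j, k)) ` N \<subseteq> edges p A"
    unfolding N_def edges_def using k adjacency_matrix_sym[OF adj] by auto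
  moreover note finite_edges
  moreover have "card (Pair k ` N \<union> (\<lambda>j. (j, k)) ` N) = 2 * card N"
  proof -
    have "Pair k ` N \<inter> (\<lambda>j. (j, k)) ` N = {}"
      unfolding N_def using adjacency_matrix_diag[OF adj k] by auto
    then have "card (Pair k ` N \<union> (\<lambda>j. (j, k)) ` N) = card (Pair k ` N) + card ((\<lambda>j. (j, k)) ` N)"
      unfolding N_def by (intro card_Un_disjoint) auto
    then show ?thesis by (simp add: card_image inj_on_def)
  qed
  ultimately show ?thesis unfolding N_def[symmetric] by (metis card_mono)
qed

lemma neg_lambda_min_le_half_card_edges:
  assumes adj: "adjacency_matrix p A" and p: "0 < p"
  shows "- lambda_min A \<le> real (card (edges p A)) / 2"
proof -
  obtain c where c: "eigenvalue A c" "Re c = lambda_min A"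
    using lambda_min_eigenvalue[OF adjacency_matrix_carrier[OF adj] adjacency_matrix_self_adjoint[OF adj] p]
    by blast
  obtain k where "k < p" "cmod c \<le> real (card {j. j < p \<and> A $$ (k, j) = 1})"
    using adjacency_eigenvalue_le_degree[OF adj c(1)] by blast
  moreover have "- Re c \<le> cmod c" using abs_Re_le_cmod[of c] by linarith
  ultimately show ?thesis using two_degree_le_card_edges[OF adj] c(2) by fastforce
qed

definition mat_unit :: "nat \<Rightarrow> nat \<Rightarrow> nat \<Rightarrow> complex mat" where
  "mat_unit p a b = mat p p (\<lambda>(i, j). if i = a \<and> j = b then 1 else 0)"

lemma gamma_map_rank_one_coefficients:
  assumes \<gamma>: "\<forall>X\<in>carrier_mat p p. gamma_map p A t X \<in> carrier_mat p p \<and>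
      (\<forall>l<p. \<forall>m<p. gamma_map p A t X $$ (l, m) = (\<Sum>k<L. V k $ l * quad_form X (W k) * cnj (V k $ m)))"
    and W: "\<forall>k<L. W k \<in> carrier_vec p"
    and abl: "a < p" "b < p" "l < p" "m < p"
  shows "(\<Sum>k<L. V k $ l * cnj (W k $ a) * W k $ b * cnj (V k $ m))
    = (if l = m \<and> a = b then of_real t / of_nat p else 0) + (if l = a \<and> m = b then A $$ (l, m) else 0)"
proof -
  have E: "mat_unit p a b \<in> carrier_mat p p" unfolding mat_unit_def by simp
  have qE: "quad_form (mat_unit p a b) w = cnj (w $ a) * w $ b" if "w \<in> carrier_vec p" for w
  proof -
    have "quad_form (mat_unit p a b) w = (\<Sum>i<p. \<Sum>j<p. if i = a \<and> j = b then cnj (w $ i) * w $ j else 0)"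
      unfolding quad_form_def mat_unit_def using that by (intro sum.cong refl) auto
    then show ?thesis using abl by (simp add: sum_sum_delta)
  qed
  have tr: "ntr p (mat_unit p a b) = (if a = b then 1 else 0) / of_nat p"
    unfolding ntr_def mtrace_def mat_unit_def using abl by (simp add: if_distrib cong: if_cong)
  have "(\<Sum>k<L. V k $ l * cnj (W k $ a) * W k $ b * cnj (V k $ m)) = gamma_map p A t (mat_unit p a b) $$ (l, m)"
    using \<gamma> E abl W qE by (auto simp: mult.assoc intro!: sum.cong)
  also have "\<dots> = (if l = m \<and> a = b then of_real t / of_nat p else 0) + (if l = a \<and> m = b then A $$ (l, m) else 0)"
    unfolding gamma_map_index[OF E abl(3,4)] tr using abl by (auto simp: mat_unit_def)
  finally show ?thesis .
qed

lemma rank_one_trace_sum: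
  assumes V: "\<forall>k<L. V k \<in> carrier_vec p" and u: "u \<in> carrier_vec p" and p: "0 < p"
    and coeff: "\<And>n i. n < p \<Longrightarrow> i < p \<Longrightarrow> (\<Sum>k<L. V k $ n * cnj (W k $ i) * W k $ i * cnj (V k $ n)) = r"
  shows "(\<Sum>k<L. ntr p (outer_mat (V k)) * of_real (sq_norm (vec p (\<lambda>i. u $ i * W k $ i))))
    = r * of_real (sq_norm u)"
proof -
  have "(\<Sum>k<L. ntr p (outer_mat (V k)) * of_real (sq_norm (vec p (\<lambda>i. u $ i * W k $ i))))
      = (\<Sum>k<L. \<Sum>n<p. \<Sum>i<p. (cnj (u $ i) * u $ i) * (V k $ n * cnj (W k $ i) * W k $ i * cnj (V k $ n)) / of_nat p)"
  proof (rule sum.cong[OF refl])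
    fix k assume "k \<in> {..<L}"
    then have "ntr p (outer_mat (V k)) = (\<Sum>n<p. V k $ n * cnj (V k $ n)) / of_nat p"
      unfolding ntr_def using mtrace_outer_mat V by simp
    moreover have "of_real (sq_norm (vec p (\<lambda>i. u $ i * W k $ i)))
        = (\<Sum>i<p. cnj (u $ i * W k $ i) * (u $ i * W k $ i))"
      using sum_cnj_mult_self[of "vec p (\<lambda>i. u $ i * W k $ i)"] by simp
    ultimately show "ntr p (outer_mat (V k)) * of_real (sq_norm (vec p (\<lambda>i. u $ i * W k $ i)))
        = (\<Sum>n<p. \<Sum>i<p. (cnj (u $ i) * u $ i) * (V k $ n * cnj (W k $ i) * W k $ i * cnj (V k $ n)) / of_nat p)"
      by (simp add: sum_product sum_divide_distrib algebra_simps)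
  qed
  also have "\<dots> = (\<Sum>n<p. \<Sum>i<p. \<Sum>k<L. (cnj (u $ i) * u $ i) * (V k $ n * cnj (W k $ i) * W k $ i * cnj (V k $ n)) / of_nat p)"
    by (rule sum_rotate3)
  also have "\<dots> = (\<Sum>n<p. \<Sum>i<p. (cnj (u $ i) * u $ i) * r / of_nat p)"
    using coeff by (simp add: sum_distrib_left[symmetric] sum_divide_distrib[symmetric])
  also have "\<dots> = (\<Sum>i<p. of_nat p * ((cnj (u $ i) * u $ i) * r / of_nat p))"
    by (simp add: sum_distrib_left)
  also have "\<dots> = r * (\<Sum>i<p. cnj (u $ i) * u $ i)"
    using p by (simp add: sum_distrib_left mult.commute)
  finally show ?thesis using sum_cnj_mult_self[of u] u by simp
qed

lemma rank_one_schur_sum: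
  assumes V: "\<forall>k<L. V k \<in> carrier_vec p" and u: "u \<in> carrier_vec p"
    and coeff: "\<And>l m. l < p \<Longrightarrow> m < p \<Longrightarrow>
      A $$ (l, m) * (\<Sum>k<L. V k $ l * cnj (W k $ l) * W k $ m * cnj (V k $ m)) = A $$ (l, m)"
  shows "(\<Sum>k<L. \<Sum>l<p. \<Sum>m<p. cnj (vec p (\<lambda>i. u $ i * W k $ i) $ l)
      * (A $$ (l, m) * outer_mat (V k) $$ (l, m)) * vec p (\<lambda>i. u $ i * W k $ i) $ m) = quad_form A u"
proof -
  have "(\<Sum>k<L. \<Sum>l<p. \<Sum>m<p. cnj (vec p (\<lambda>i. u $ i * W k $ i) $ l)
        * (A $$ (l, m) * outer_mat (V k) $$ (l, m)) * vec p (\<lambda>i. u $ i * W k $ i) $ m)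
      = (\<Sum>k<L. \<Sum>l<p. \<Sum>m<p. (cnj (u $ l) * u $ m) * (A $$ (l, m)
          * (V k $ l * cnj (W k $ l) * W k $ m * cnj (V k $ m))))"
    using V by (intro sum.cong refl) (auto simp: outer_mat_def algebra_simps)
  also have "\<dots> = (\<Sum>l<p. \<Sum>m<p. \<Sum>k<L. (cnj (u $ l) * u $ m) * (A $$ (l, m)
          * (V k $ l * cnj (W k $ l) * W k $ m * cnj (V k $ m))))"
    by (rule sum_rotate3)
  also have "\<dots> = (\<Sum>l<p. \<Sum>m<p. cnj (u $ l) * A $$ (l, m) * u $ m)"
  proof (intro sum.cong refl)
    fix l m assume "l \<in> {..<p}" "m \<in> {..<p}"
    then have "(\<Sum>k<L. (cnj (u $ l) * u $ m) * (A $$ (l, m)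
          * (V k $ l * cnj (W k $ l) * W k $ m * cnj (V k $ m))))
        = (cnj (u $ l) * u $ m) * A $$ (l, m)"
      using coeff[of l m] by (simp add: sum_distrib_left[symmetric])
    then show "(\<Sum>k<L. (cnj (u $ l) * u $ m) * (A $$ (l, m)
          * (V k $ l * cnj (W k $ l) * W k $ m * cnj (V k $ m))))
        = cnj (u $ l) * A $$ (l, m) * u $ m"
      by (simp add: mult_ac)
  qed
  finally show ?thesis unfolding quad_form_def using u by simp
qed

text \<open>Testing \<open>\<gamma>\<^sub>s\<close> on the positive matrices \<open>v\<^sub>k v\<^sub>k\<^sup>*\<close> of a representation of \<open>\<gamma>\<^sub>t\<close>,
  against the vectors \<open>u \<circ> w\<^sub>k\<close> for an eigenvector \<open>u\<close> of \<open>\<lambda>\<^sub>m\<^sub>i\<^sub>n\<close>.\<close>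

lemma positive_entanglement_breaking_gamma_map_product:
  assumes adj: "adjacency_matrix p A" and p: "0 < p"
    and s: "positive_map p (gamma_map p A s)" and t: "entanglement_breaking p (gamma_map p A t)"
  shows "- real p * lambda_min A \<le> s * t"
proof -
  obtain V W :: "nat \<Rightarrow> complex vec" and L :: nat
    where VW: "\<forall>k<L. V k \<in> carrier_vec p \<and> W k \<in> carrier_vec p"
      and \<gamma>: "\<forall>X\<in>carrier_mat p p. gamma_map p A t X \<in> carrier_mat p p \<and>
        (\<forall>l<p. \<forall>m<p. gamma_map p A t X $$ (l, m) = (\<Sum>k<L. V k $ l * quad_form X (W k) * cnj (V k $ m)))"
    by (rule entanglement_breaking_entries[OF t])
  have V: "\<forall>k<L. V k \<in> carrier_vec p" and W: "\<forall>k<L. W k \<in> carrier_vec p" using VW by auto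
  note coeff = gamma_map_rank_one_coefficients[OF \<gamma> W]
  obtain c where c: "eigenvalue A c" "Re c = lambda_min A"
    using lambda_min_eigenvalue[OF adjacency_matrix_carrier[OF adj] adjacency_matrix_self_adjoint[OF adj] p]
    by blast
  obtain u where u: "u \<in> carrier_vec p" "0 < sq_norm u" "quad_form A u = c * of_real (sq_norm u)"
    using eigenvalue_quad_form[OF adjacency_matrix_carrier[OF adj] c(1)] by metis
  define y where "y k = vec p (\<lambda>i. u $ i * W k $ i)" for k
  have y: "y k \<in> carrier_vec p" for k unfolding y_def by simp
  have "0 \<le> Re (\<Sum>k<L. quad_form (gamma_map p A s (outer_mat (V k))) (y k))"
    unfolding Re_sum using V y
    by (auto intro!: sum_nonneg positive_gamma_map_quad_form[OF s outer_mat_carrier outer_mat_psd])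
  also have "(\<Sum>k<L. quad_form (gamma_map p A s (outer_mat (V k))) (y k))
      = of_real s * (\<Sum>k<L. ntr p (outer_mat (V k)) * of_real (sq_norm (y k)))
        + (\<Sum>k<L. \<Sum>l<p. \<Sum>m<p. cnj (y k $ l) * (A $$ (l, m) * outer_mat (V k) $$ (l, m)) * y k $ m)"
    unfolding sum.distrib[symmetric] sum_distrib_left using V y
    by (intro sum.cong refl) (simp add: quad_form_gamma_map outer_mat_carrier mult.assoc)
  also have "(\<Sum>k<L. ntr p (outer_mat (V k)) * of_real (sq_norm (y k))) = of_real t / of_nat p * of_real (sq_norm u)"
    unfolding y_def using coeff adjacency_matrix_diag[OF adj]
    by (intro rank_one_trace_sum[OF V u(1) p]) auto
  also have "(\<Sum>k<L. \<Sum>l<p. \<Sum>m<p. cnj (y k $ l) * (A $$ (l, m) * outer_mat (V k) $$ (l, m)) * y k $ m)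
      = quad_form A u"
    unfolding y_def using coeff adjacency_matrix_entry[OF adj] adjacency_matrix_diag[OF adj]
    by (intro rank_one_schur_sum[OF V u(1)]) (fastforce simp: divide_simps)
  finally have "0 \<le> (s * t / real p + Re c) * sq_norm u" using u(3) by (simp add: algebra_simps)
  then have "- Re c \<le> s * t / real p" using u(2) by (simp add: zero_le_mult_iff)
  then show ?thesis using c(2) p by (simp add: field_simps)
qed

subsection \<open>Passing to the infima\<close>

lemma Inf_mult_lower_bound:
  fixes S T :: "real set"
  assumes S: "S \<noteq> {}" "\<forall>s\<in>S. a \<le> s" "0 < a"
    and T: "T \<noteq> {}" "\<forall>t\<in>T. c \<le> t"
    and N: "\<forall>s\<in>S. \<forall>t\<in>T. N \<le> s * (t - c)"
  shows "N \<le> Inf S * (Inf T - c)"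
proof -
  have "a \<le> Inf S" using S by (intro cInf_greatest) auto
  then have S_pos: "0 < Inf S" using S(3) by linarith
  have T_ge: "c \<le> Inf T" using T by (intro cInf_greatest) auto
  show ?thesis
  proof (cases "N \<le> 0")
    case True
    moreover have "0 \<le> Inf S * (Inf T - c)" using S_pos T_ge by simp
    ultimately show ?thesis by linarith
  next
    case False
    obtain s0 where s0: "s0 \<in> S" using S(1) by blast
    have "N / Inf S + c \<le> t" if t: "t \<in> T" for t
    proof -
      have "0 < s0 * (t - c)" using N s0 t False by force
      moreover have "0 < s0" using S s0 by force
      ultimately have "0 < t - c" by (simp add: zero_less_mult_iff)
      then have "N / (t - c) \<le> Inf S"
        using N t by (intro cInf_greatest[OF S(1)]) (simp add: pos_divide_le_eq mult.commute)
      then show ?thesis using S_pos \<open>0 < t - c\<close> by (simp add: field_simps)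
    qed
    then have "N / Inf S + c \<le> Inf T" by (rule cInf_greatest[OF T(1)])
    then show ?thesis using S_pos by (simp add: field_simps)
  qed
qed

lemma gamma_map_parameters:
  assumes adj: "adjacency_matrix p A" and edge: "i < p" "j < p" "A $$ (i, j) = 1"
  shows positive_gamma_maps_nonempty: "{t. positive_map p (gamma_map p A t)} \<noteq> {}"
    and entanglement_breaking_gamma_maps_nonempty: "{t. entanglement_breaking p (gamma_map p A t)} \<noteq> {}"
    and positive_gamma_map_ge_one: "positive_map p (gamma_map p A s) \<Longrightarrow> 1 \<le> s"
proof -
  show eb: "{t. entanglement_breaking p (gamma_map p A t)} \<noteq> {}"
    using gamma_map_entanglement_breaking[OF adj] edge by blast
  then show "{t. positive_map p (gamma_map p A t)} \<noteq> {}"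
    using entanglement_breaking_imp_positive_map by blast
  have "i \<noteq> j" using adjacency_matrix_diag[OF adj edge(1)] edge(3) by auto
  then have "2 \<le> p" using edge by linarith
  then show "positive_map p (gamma_map p A s) \<Longrightarrow> 1 \<le> s"
    using positive_gamma_map_ge_half_dim[OF adj edge] by fastforce
qed

lemma t_pos_greatest:
  assumes "{t. positive_map p (gamma_map p A t)} \<noteq> {}"
    and "\<And>s. positive_map p (gamma_map p A s) \<Longrightarrow> b \<le> s"
  shows "b \<le> t_pos p A"
  unfolding t_pos_def using assms by (intro cInf_greatest) auto

lemma t_pos_t_eb_product:
  assumes adj: "adjacency_matrix p A" and edge: "i < p" "j < p" "A $$ (i, j) = 1"
  shows "- real p * lambda_min A \<le> t_pos p A * t_eb p A"
proof -
  have "- real p * lambda_min A \<le> Inf {s. positive_map p (gamma_map p A s)}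
      * (Inf {t. entanglement_breaking p (gamma_map p A t)} - 0)"
  proof (rule Inf_mult_lower_bound[where a = 1 and c = 0])
    show "\<forall>s\<in>{s. positive_map p (gamma_map p A s)}. \<forall>t\<in>{t. entanglement_breaking p (gamma_map p A t)}.
        - real p * lambda_min A \<le> s * (t - 0)"
      using positive_entanglement_breaking_gamma_map_product[OF adj] edge by auto
  qed (use gamma_map_parameters[OF adj edge]
      positive_gamma_map_ge_one[OF adj edge, OF entanglement_breaking_imp_positive_map]
      in \<open>auto intro: order_trans[OF zero_le_one]\<close>)
  then show ?thesis unfolding t_pos_def t_eb_def by simp
qed

lemma one_le_lambda_max:
  assumes H: "H \<in> carrier_mat p p" "self_adjoint H" "\<forall>i<p. H $$ (i, i) = 1" and p: "0 < p"
  shows "1 \<le> lambda_max H"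
  using quad_form_le_lambda_max[OF H(1,2) p unit_vec_carrier[of p 0]]
    quad_form_unit_vec[OF p, of H] H(3) p sq_norm_unit_vec[OF p]
  by simp

lemma t_pos_theta_product:
  assumes adj: "adjacency_matrix p A" and edge: "i < p" "j < p" "A $$ (i, j) = 1"
  shows "lambda_max A \<le> t_pos p A * (theta_compl p A - 1)" and "1 \<le> theta_compl p A"
proof -
  define \<Theta> where "\<Theta> = {lambda_max H | H. H \<in> carrier_mat p p \<and> self_adjoint H \<and>
      (\<forall>i<p. H $$ (i, i) = 1) \<and> (\<forall>i<p. \<forall>j<p. A $$ (i, j) = 1 \<longrightarrow> H $$ (i, j) = 1)}"
  have "p > 0" using edge by simp
  have "self_adjoint (mat p p (\<lambda>_. 1))" by (subst self_adjoint_iff_hermitian[of _ p]) auto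
  then have "lambda_max (mat p p (\<lambda>_. 1)) \<in> \<Theta>"
    unfolding \<Theta>_def by (auto intro!: exI[of _ "mat p p (\<lambda>_. 1)"])
  then have \<Theta>: "\<Theta> \<noteq> {}" "\<forall>t\<in>\<Theta>. 1 \<le> t"
    unfolding \<Theta>_def using one_le_lambda_max \<open>p > 0\<close> by auto
  have "lambda_max A \<le> Inf {s. positive_map p (gamma_map p A s)} * (Inf \<Theta> - 1)"
  proof (rule Inf_mult_lower_bound[where a = 1 and c = 1])
    show "\<forall>s\<in>{s. positive_map p (gamma_map p A s)}. \<forall>t\<in>\<Theta>. lambda_max A \<le> s * (t - 1)"
      unfolding \<Theta>_def using positive_gamma_map_lambda_max_le[OF adj \<open>p > 0\<close>] by auto
  qed (use gamma_map_parameters[OF adj edge] \<Theta> in auto)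
  then show "lambda_max A \<le> t_pos p A * (theta_compl p A - 1)"
    unfolding t_pos_def theta_compl_def \<Theta>_def .
  show "1 \<le> theta_compl p A"
    unfolding theta_compl_def \<Theta>_def[symmetric] using \<Theta> by (intro cInf_greatest) auto
qed

theorem mainTheorem11:
  fixes p :: nat and A :: "complex mat"
  assumes "adjacency_matrix p A"
    and "edges p A \<noteq> {}"
  shows "t_pos p A \<ge> Max {1, - lambda_min A,
            - real p * lambda_min A / real (card (edges p A)),
            - real p * lambda_min A / t_eb p A,
            lambda_max A / (theta_compl p A - 1)}"
proof -
  note adj = assms(1)
  obtain i j where edge: "i < p" "j < p" "A $$ (i, j) = 1" using assms(2) unfolding edges_def by auto
  then have p: "0 < p" by simp
  note t_pos_ge = t_pos_greatest[OF positive_gamma_maps_nonempty[OF adj edge]]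
  have one: "1 \<le> t_pos p A" by (rule t_pos_ge[OF positive_gamma_map_ge_one[OF adj edge]])
  have lambda_min: "- lambda_min A \<le> t_pos p A"
    by (rule t_pos_ge[OF positive_gamma_map_ge_neg_lambda_min[OF adj p]])
  have "0 < real (card (edges p A))" using finite_edges assms(2) by (simp add: card_gt_0_iff)
  moreover have "- real p * lambda_min A \<le> real p / 2 * real (card (edges p A))"
    using mult_left_mono[OF neg_lambda_min_le_half_card_edges[OF adj p], of "real p"] by simp
  ultimately have "- real p * lambda_min A / real (card (edges p A)) \<le> real p / 2"
    by (metis pos_divide_le_eq)
  also have "real p / 2 \<le> t_pos p A" by (rule t_pos_ge[OF positive_gamma_map_ge_half_dim[OF adj edge]])
  finally have edges: "- real p * lambda_min A / real (card (edges p A)) \<le> t_pos p A" .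
  have "1 \<le> t_eb p A"
    unfolding t_eb_def using entanglement_breaking_gamma_maps_nonempty[OF adj edge]
      positive_gamma_map_ge_one[OF adj edge, OF entanglement_breaking_imp_positive_map]
    by (intro cInf_greatest) auto
  then have eb: "- real p * lambda_min A / t_eb p A \<le> t_pos p A"
    using t_pos_t_eb_product[OF adj edge] by (subst pos_divide_le_eq) auto
  have "lambda_max A / (theta_compl p A - 1) \<le> t_pos p A"
    using t_pos_theta_product[OF adj edge] one by (cases "theta_compl p A = 1") (simp_all add: divide_le_eq)
  then show ?thesis using one lambda_min edges eb by simp
qed
end
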